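(* Let $\mathcal A$ be a finite set, $\mathcal R\subset F(\mathcal A)$ finite, $\phi:F(\mathcal A)\to F(\mathcal A)$ a homomorphism, $G$ the group with presentation $\mathcal P=\langle t,\mathcal A:\mathcal R,\ t^{-1}at=\phi(a)\ (a\in\mathcal A)\rangle$, $X$ its Cayley 2-complex, and $\Lambda\subset X$ the Cayley graph of $A=\langle\mathcal A\rangle\le G$ with respect to $\mathcal A$. Let $s=(s_0,s_1,\dots)$ be a proper edge path ray in $\Lambda$ with initial vertex $v$, and let $r_v$ be the edge path ray at $v$ each of whose edges is labeled $t$. Define $H_s:[0,\infty)\times[0,\infty)\to X$ by $H_s(n+x,y)=H_{s_n}(x,y)$ for integers $n\ge0$ and $(x,y)\in[0,1]\times[0,\infty)$, where $H_{s_n}$ is the strip map of the edge $s_n$ described in the context. Then $H_s$ is a proper homotopy of $s$ to $r_v$ rel $\{v\}$.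
   Context: The Cayley 2-complex $X$ of $\mathcal P$ is the simply connected 2-complex whose 1-skeleton is the Cayley graph of $G$ with respect to $\mathcal A\cup\{t\}$ (vertex set $G$), with a 2-cell at each vertex for each relator. $\Lambda$ is the subgraph with vertex set $A$ and the $\mathcal A$-labeled edges between them. Strip map: for an edge $e$ (traversed from $v'$ to $w'$) with label $a\in\mathcal A^{\pm1}$ and each integer $k\ge0$, the edge path at $v't^k$ reading the word $\phi^k(a)$ ends at $w't^k$; the conjugation 2-cells attached along its edges form a strip bounded by this path, the $t$-edges at $v't^k$ and $w't^k$, and the path labeled $\phi^{k+1}(a)$ at $v't^{k+1}$. $H_e:[0,1]\times[0,\infty)\to X$ maps $[0,1]\times[k,k+1]$ onto this strip with $[0,1]\times\{k\}$ to the path labeled $\phi^k(a)$ and $\{0\}\times[k,k+1]$, $\{1\}\times[k,k+1]$ to the $t$-edges at $v't^k$, $w't^k$. Edge path rays are parametrized so that the $i$-th edge is traversed on $[i-1,i]$. *)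

theory Defs
  imports "HOL-Analysis.Analysis"
begin

text \<open>A letter is a generator together with an inversion flag (True = inverse).
  Generators are Some a for a in the generating set, and None stands for t.\<close>
type_synonym 'a letter = "'a option \<times> bool"
type_synonym 'a word = "'a letter list"

definition inv_letter :: "'a letter \<Rightarrow> 'a letter" where
  "inv_letter l = (fst l, \<not> snd l)"

definition inv_word :: "'a word \<Rightarrow> 'a word" where
  "inv_word w = rev (map inv_letter w)"

definition reduced :: "'a word \<Rightarrow> bool" where
  "reduced w \<longleftrightarrow> (\<forall>i. Suc i < length w \<longrightarrow> w ! Suc i \<noteq> inv_letter (w ! i))"

fun free_red :: "'a word \<Rightarrow> 'a word" where
  "free_red [] = []"
| "free_red (l # w) = (case free_red w of [] \<Rightarrow> [l]
      | (m # u) \<Rightarrow> (if m = inv_letter l then u else l # m # u))"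

text \<open>Words (elements of the free group F(A), as reduced words) over the generating set A.\<close>
definition A_word :: "'a set \<Rightarrow> 'a word \<Rightarrow> bool" where
  "A_word \<A> w \<longleftrightarrow> reduced w \<and> (\<forall>l\<in>set w. fst l \<in> Some ` \<A>)"

definition phi_letter :: "('a \<Rightarrow> 'a word) \<Rightarrow> 'a letter \<Rightarrow> 'a word" where
  "phi_letter \<phi> l = (case fst l of
      Some a \<Rightarrow> (if snd l then inv_word (\<phi> a) else \<phi> a)
    | None \<Rightarrow> [l])"

definition phi_word :: "('a \<Rightarrow> 'a word) \<Rightarrow> 'a word \<Rightarrow> 'a word" where
  "phi_word \<phi> w = free_red (concat (map (phi_letter \<phi>) w))"

definition phi_pow :: "('a \<Rightarrow> 'a word) \<Rightarrow> nat \<Rightarrow> 'a word \<Rightarrow> 'a word" where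
  "phi_pow \<phi> k w = (phi_word \<phi> ^^ k) w"

definition tpow :: "nat \<Rightarrow> 'a word" where
  "tpow k = replicate k (None, False)"

definition conj_rel :: "('a \<Rightarrow> 'a word) \<Rightarrow> 'a \<Rightarrow> 'a word" where
  "conj_rel \<phi> a = [(None, True), (Some a, False), (None, False)] @ inv_word (\<phi> a)"

definition rels :: "'a set \<Rightarrow> 'a word set \<Rightarrow> ('a \<Rightarrow> 'a word) \<Rightarrow> 'a word set" where
  "rels \<A> R \<phi> = R \<union> conj_rel \<phi> ` \<A>"

definition gens :: "'a set \<Rightarrow> 'a option set" where
  "gens \<A> = insert None (Some ` \<A>)"

inductive peq :: "'a word set \<Rightarrow> 'a word \<Rightarrow> 'a word \<Rightarrow> bool" for Rl where
  refl: "peq Rl w w"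
| sym: "peq Rl u w \<Longrightarrow> peq Rl w u"
| trans: "peq Rl u v \<Longrightarrow> peq Rl v w \<Longrightarrow> peq Rl u w"
| free: "peq Rl (u @ [l, inv_letter l] @ w) (u @ w)"
| rel: "r \<in> Rl \<Longrightarrow> peq Rl (u @ r @ w) (u @ w)"

text \<open>Group elements are equivalence classes of words.\<close>
type_synonym 'a grp = "'a word set"

definition vcls :: "'a word set \<Rightarrow> 'a word \<Rightarrow> 'a grp" where
  "vcls Rl w = {w'. peq Rl w w'}"

definition grp_carrier :: "'a set \<Rightarrow> 'a word set \<Rightarrow> 'a grp set" where
  "grp_carrier \<A> Rl = {vcls Rl w | w. \<forall>l\<in>set w. fst l \<in> gens \<A>}"

definition subgrp_A :: "'a set \<Rightarrow> 'a word set \<Rightarrow> 'a grp set" where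
  "subgrp_A \<A> Rl = {vcls Rl w | w. \<forall>l\<in>set w. fst l \<in> Some ` \<A>}"

definition gmulw :: "'a word set \<Rightarrow> 'a grp \<Rightarrow> 'a word \<Rightarrow> 'a grp" where
  "gmulw Rl g u = vcls Rl ((SOME w. w \<in> g) @ u)"

definition gmul :: "'a word set \<Rightarrow> 'a grp \<Rightarrow> 'a letter \<Rightarrow> 'a grp" where
  "gmul Rl g l = gmulw Rl g [l]"

text \<open>Points of the disjoint union of cells: vertices, edges (g,x) from g to gx
  parametrised by [0,1], and 2-cells (g,r) parametrised by the closed unit disc.\<close>
datatype ('v, 'l, 'r) cpt = Vtx 'v | Edg 'v 'l real | Cel 'v 'r complex

type_synonym 'a xpt = "('a grp, 'a option, 'a word) cpt"

text \<open>Boundary parameter in [0,1) of a point on the unit circle.\<close>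
definition bparam :: "complex \<Rightarrow> real" where
  "bparam z = (if Arg z < 0 then Arg z + 2 * pi else Arg z) / (2 * pi)"

definition canon_edge :: "'a word set \<Rightarrow> 'a grp \<Rightarrow> 'a option \<Rightarrow> real \<Rightarrow> 'a xpt" where
  "canon_edge Rl g x s =
     (if s = 0 then Vtx g else if s = 1 then Vtx (gmul Rl g (x, False)) else Edg g x s)"

text \<open>Point at parameter s of the oriented edge starting at u and reading letter l.\<close>
definition oe_pt :: "'a word set \<Rightarrow> 'a grp \<times> 'a letter \<Rightarrow> real \<Rightarrow> 'a xpt" where
  "oe_pt Rl e s = (let u = fst e; l = snd e in
     if snd l then canon_edge Rl (gmul Rl u l) (fst l) (1 - s)
     else canon_edge Rl u (fst l) s)"

text \<open>Attaching map of the 2-cell at g for relator r: the boundary circle is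
  divided into length r arcs, the j-th traversing the j-th edge of the path reading r from g.\<close>
definition attach :: "'a word set \<Rightarrow> 'a grp \<Rightarrow> 'a word \<Rightarrow> real \<Rightarrow> 'a xpt" where
  "attach Rl g r \<theta> =
     (if r = [] then Vtx g else
      (let n = length r; j = nat \<lfloor>real n * \<theta>\<rfloor>; s = real n * \<theta> - real j in
        oe_pt Rl (gmulw Rl g (take j r), r ! j) s))"

text \<open>Canonical representative of the identification class of a point.\<close>
fun canon :: "'a word set \<Rightarrow> 'a xpt \<Rightarrow> 'a xpt" where
  "canon Rl (Vtx g) = Vtx g"
| "canon Rl (Edg g x s) = canon_edge Rl g x s"
| "canon Rl (Cel g r z) = (if norm z = 1 then attach Rl g r (bparam z) else Cel g r z)"

definition cells_carrier :: "'a set \<Rightarrow> 'a word set \<Rightarrow> 'a xpt set" where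
  "cells_carrier \<A> Rl =
     {Vtx g | g. g \<in> grp_carrier \<A> Rl}
   \<union> {Edg g x s | g x s. g \<in> grp_carrier \<A> Rl \<and> x \<in> gens \<A> \<and> 0 \<le> s \<and> s \<le> 1}
   \<union> {Cel g r z | g r z. g \<in> grp_carrier \<A> Rl \<and> r \<in> Rl \<and> norm z \<le> 1}"

text \<open>Quotient (CW) topology of the Cayley 2-complex.\<close>
definition cayley_top :: "'a set \<Rightarrow> 'a word set \<Rightarrow> 'a xpt topology" where
  "cayley_top \<A> Rl = topology (\<lambda>U. U \<subseteq> canon Rl ` cells_carrier \<A> Rl \<and>
     (\<forall>g\<in>grp_carrier \<A> Rl. \<forall>x\<in>gens \<A>.
        openin (top_of_set {0..1}) {s \<in> {0..1}. canon Rl (Edg g x s) \<in> U}) \<and>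
     (\<forall>g\<in>grp_carrier \<A> Rl. \<forall>r\<in>Rl.
        openin (top_of_set (cball 0 1)) {z \<in> cball 0 1. canon Rl (Cel g r z) \<in> U}))"

text \<open>Edge path ray given by oriented edges (start vertex, letter), parametrised so that
  the n-th edge (n from 0) is traversed on [n, n+1].\<close>
definition ray_map :: "'a word set \<Rightarrow> (nat \<Rightarrow> 'a grp \<times> 'a letter) \<Rightarrow> real \<Rightarrow> 'a xpt" where
  "ray_map Rl s y = oe_pt Rl (s (nat \<lfloor>y\<rfloor>)) (y - of_int \<lfloor>y\<rfloor>)"

definition edge_path_ray_in_Lambda ::
  "'a set \<Rightarrow> 'a word set \<Rightarrow> (nat \<Rightarrow> 'a grp \<times> 'a letter) \<Rightarrow> bool" where
  "edge_path_ray_in_Lambda \<A> Rl s \<longleftrightarrow>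
     (\<forall>n. fst (s n) \<in> subgrp_A \<A> Rl \<and> fst (snd (s n)) \<in> Some ` \<A> \<and>
          fst (s (Suc n)) = gmul Rl (fst (s n)) (snd (s n)))"

definition proper_ray :: "'a set \<Rightarrow> 'a word set \<Rightarrow> (nat \<Rightarrow> 'a grp \<times> 'a letter) \<Rightarrow> bool" where
  "proper_ray \<A> Rl s \<longleftrightarrow>
     (\<forall>K. compactin (cayley_top \<A> Rl) K \<longrightarrow>
        compactin (top_of_set {0..}) {y \<in> {0::real..}. ray_map Rl s y \<in> K})"

definition t_ray :: "'a word set \<Rightarrow> 'a grp \<Rightarrow> nat \<Rightarrow> 'a grp \<times> 'a letter" where
  "t_ray Rl v n = (gmulw Rl v (tpow n), (None, False))"

definition word_path :: "'a word set \<Rightarrow> 'a grp \<Rightarrow> 'a word \<Rightarrow> real \<Rightarrow> 'a xpt" where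
  "word_path Rl u w x =
     (if w = [] then Vtx u else
      (let n = length w; j = min (nat \<lfloor>real n * x\<rfloor>) (n - 1) in
        oe_pt Rl (gmulw Rl u (take j w), w ! j) (real n * x - real j)))"

definition closed_cell :: "'a word set \<Rightarrow> 'a grp \<Rightarrow> 'a word \<Rightarrow> 'a xpt set" where
  "closed_cell Rl g r = canon Rl ` {Cel g r z | z. norm z \<le> 1}"

text \<open>The strip of the oriented edge (v', l) at level k: the conjugation 2-cells attached
  along the edges of the path reading phi^k(l) at v' t^k, together with its boundary.\<close>
definition strip :: "'a word set \<Rightarrow> ('a \<Rightarrow> 'a word) \<Rightarrow> 'a grp \<times> 'a letter \<Rightarrow> nat \<Rightarrow> 'a xpt set" where
  "strip Rl \<phi> e k =
    (let v' = fst e; l = snd e; w' = gmul Rl v' l;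
         u0 = gmulw Rl v' (tpow k); w = phi_pow \<phi> k [l] in
      (\<Union>j<length w.
         let m = w ! j; uj = gmulw Rl u0 (take j w);
             base = (if snd m then gmul Rl uj m else uj) in
           closed_cell Rl (gmul Rl base (None, False)) (conj_rel \<phi> (the (fst m))))
      \<union> (\<lambda>y. oe_pt Rl (u0, (None, False)) y) ` {0..1}
      \<union> (\<lambda>y. oe_pt Rl (gmulw Rl w' (tpow k), (None, False)) y) ` {0..1}
      \<union> word_path Rl u0 w ` {0..1}
      \<union> word_path Rl (gmulw Rl v' (tpow (Suc k))) (phi_pow \<phi> (Suc k) [l]) ` {0..1})"

definition is_strip_map ::
  "'a set \<Rightarrow> 'a word set \<Rightarrow> ('a \<Rightarrow> 'a word) \<Rightarrow> 'a grp \<times> 'a letter \<Rightarrow> (real \<times> real \<Rightarrow> 'a xpt) \<Rightarrow> bool" where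
  "is_strip_map \<A> Rl \<phi> e H \<longleftrightarrow>
    (let v' = fst e; l = snd e; w' = gmul Rl v' l in
     continuous_map (top_of_set ({0..1} \<times> {0..})) (cayley_top \<A> Rl) H \<and>
     (\<forall>k::nat. \<forall>x\<in>{0..1}.
        H (x, real k) = word_path Rl (gmulw Rl v' (tpow k)) (phi_pow \<phi> k [l]) x) \<and>
     (\<forall>k::nat. \<forall>y\<in>{real k..real k + 1}.
        H (0, y) = oe_pt Rl (gmulw Rl v' (tpow k), (None, False)) (y - real k) \<and>
        H (1, y) = oe_pt Rl (gmulw Rl w' (tpow k), (None, False)) (y - real k)) \<and>
     (\<forall>k::nat. H ` ({0..1} \<times> {real k..real k + 1}) = strip Rl \<phi> e k))"

definition Hs :: "(nat \<Rightarrow> 'a grp \<times> 'a letter) \<Rightarrow> ('a grp \<times> 'a letter \<Rightarrow> real \<times> real \<Rightarrow> 'a xpt)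
    \<Rightarrow> real \<times> real \<Rightarrow> 'a xpt" where
  "Hs s H p = H (s (nat \<lfloor>fst p\<rfloor>)) (fst p - of_int \<lfloor>fst p\<rfloor>, snd p)"

end

theory Submission
  imports Defs
begin

text \<open>The map \<open>H\<^sub>s\<close> is pasted together from the strip maps of the edges of \<open>s\<close>: consecutive strips
  agree along the \<open>t\<close>-ray at their common vertex, which also yields the boundary values.
  For properness, the Cayley complex is Hausdorff (it embeds continuously and injectively into a
  product of real lines), so the preimage of a compact set \<open>K\<close> is closed, and it is bounded:
  \<open>K\<close> meets cells based at finitely many vertices only, and every cell of the \<open>k\<close>-th strip of the
  edge \<open>s\<^sub>n\<close> is based at \<open>s\<^sub>n t\<^sup>k u\<close> for a word \<open>u\<close> of bounded length and \<open>t\<close>-degree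
  at least \<open>k - 2\<close>. Hence \<open>k\<close> is bounded by the \<open>t\<close>-degrees of the base vertices of \<open>K\<close>, and
  \<open>s\<^sub>n\<close> ranges over finitely many vertices, each of which the proper ray \<open>s\<close> visits only
  finitely often.\<close>

lemma peq_append_right: "peq Rl u v \<Longrightarrow> peq Rl (u @ x) (v @ x)"
proof (induction rule: peq.induct)
  case (free u l w) then show ?case using peq.free[of Rl u l "w @ x"] by simp
next
  case (rel r u w) then show ?case using peq.rel[of r Rl u "w @ x"] by simp
qed (auto intro: peq.intros)

lemma vcls_eq_iff: "vcls Rl u = vcls Rl w \<longleftrightarrow> peq Rl u w"
  unfolding vcls_def by (auto intro: peq.intros)

lemma peq_some_vcls: "peq Rl w (SOME w'. w' \<in> vcls Rl w)"
proof -
  have "(SOME w'. w' \<in> vcls Rl w) \<in> vcls Rl w"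
    by (rule someI[of _ w]) (simp add: vcls_def peq.refl)
  then show ?thesis by (simp add: vcls_def)
qed

lemma gmulw_vcls: "gmulw Rl (vcls Rl w) u = vcls Rl (w @ u)"
  unfolding gmulw_def vcls_eq_iff by (rule peq_append_right[OF peq.sym[OF peq_some_vcls]])

lemma gmul_vcls: "gmul Rl (vcls Rl w) l = vcls Rl (w @ [l])"
  by (simp add: gmul_def gmulw_vcls)

lemma peq_append_inv_word: "peq Rl (w @ u @ inv_word u) w"
proof (induction u arbitrary: w rule: rev_induct)
  case Nil then show ?case by (simp add: inv_word_def peq.refl)
next
  case (snoc l u)
  have "w @ (u @ [l]) @ inv_word (u @ [l]) = (w @ u) @ [l, inv_letter l] @ inv_word u"
    by (simp add: inv_word_def)
  moreover have "peq Rl ((w @ u) @ [l, inv_letter l] @ inv_word u) ((w @ u) @ inv_word u)"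
    by (rule peq.free)
  ultimately show ?case using snoc.IH peq.trans by fastforce
qed

lemma gmul_inv_letter_vcls: "gmul Rl (gmul Rl (vcls Rl w) l) (inv_letter l) = vcls Rl w"
  using peq.free[of Rl w l "[]"] by (simp add: gmul_vcls vcls_eq_iff)

lemma A_word_set: "A_word \<A> w \<Longrightarrow> set w \<subseteq> Some ` \<A> \<times> UNIV"
  by (auto simp: A_word_def mem_Times_iff)

lemma set_inv_word: "set (inv_word w) = inv_letter ` set w"
  by (simp add: inv_word_def)

lemma set_inv_word_subset: "set w \<subseteq> B \<times> UNIV \<Longrightarrow> set (inv_word w) \<subseteq> B \<times> UNIV"
  by (auto simp: set_inv_word mem_Times_iff inv_letter_def)

lemma set_free_red: "set (free_red w) \<subseteq> set w"
  by (induction w) (auto split: list.splits if_splits)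

lemma set_phi_word:
  assumes "\<forall>a\<in>\<A>. A_word \<A> (\<phi> a)" and "set w \<subseteq> Some ` \<A> \<times> UNIV"
  shows "set (phi_word \<phi> w) \<subseteq> Some ` \<A> \<times> UNIV"
proof -
  have "set (phi_letter \<phi> l) \<subseteq> Some ` \<A> \<times> UNIV" if l: "l \<in> set w" for l
  proof -
    obtain a where a: "fst l = Some a" "a \<in> \<A>"
      using assms(2) l by (auto simp: mem_Times_iff)
    then have "set (\<phi> a) \<subseteq> Some ` \<A> \<times> UNIV"
      using assms(1) A_word_set by blast
    then show ?thesis using a set_inv_word_subset[of "\<phi> a"] by (auto simp: phi_letter_def)
  qed
  then have "set (concat (map (phi_letter \<phi>) w)) \<subseteq> Some ` \<A> \<times> UNIV" by auto
  then show ?thesis unfolding phi_word_def by (rule order_trans[OF set_free_red])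
qed

lemma set_phi_pow:
  assumes "\<forall>a\<in>\<A>. A_word \<A> (\<phi> a)" and "set w \<subseteq> Some ` \<A> \<times> UNIV"
  shows "set (phi_pow \<phi> k w) \<subseteq> Some ` \<A> \<times> UNIV"
  unfolding phi_pow_def by (induction k) (simp_all add: assms set_phi_word)

lemma length_tpow [simp]: "length (tpow k) = k"
  by (simp add: tpow_def)

lemma set_tpow: "set (tpow k) \<subseteq> {(None, False)}"
  by (induction k) (simp_all add: tpow_def)

definition t_degree :: "'a word \<Rightarrow> int" where
  "t_degree w = sum_list (map (\<lambda>l. if fst l = None then (if snd l then -1 else 1) else 0) w)"

lemma t_degree_Nil [simp]: "t_degree [] = 0"
  and t_degree_Cons [simp]:
    "t_degree (l # w) = (if fst l = None then (if snd l then -1 else 1) else 0) + t_degree w"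
  and t_degree_append [simp]: "t_degree (u @ w) = t_degree u + t_degree w"
  by (simp_all add: t_degree_def)

lemma t_degree_inv_word [simp]: "t_degree (inv_word w) = - t_degree w"
  by (induction w) (auto simp: inv_word_def inv_letter_def)

lemma t_degree_tpow [simp]: "t_degree (tpow k) = int k"
  by (induction k) (simp_all add: tpow_def)

lemma t_degree_eq_0: "set w \<subseteq> Some ` B \<times> UNIV \<Longrightarrow> t_degree w = 0"
  by (induction w) auto

lemma t_degree_rels:
  assumes "\<forall>r\<in>R. A_word \<A> r" and "\<forall>a\<in>\<A>. A_word \<A> (\<phi> a)"
  shows "\<forall>r\<in>rels \<A> R \<phi>. t_degree r = 0"
proof
  fix r assume "r \<in> rels \<A> R \<phi>"
  then consider "r \<in> R" | a where "a \<in> \<A>" "r = conj_rel \<phi> a" by (auto simp: rels_def)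
  then show "t_degree r = 0"
  proof cases
    case 1 then show ?thesis using assms(1) A_word_set t_degree_eq_0 by blast
  next
    case 2
    then have "t_degree (\<phi> a) = 0" using assms(2) A_word_set t_degree_eq_0 by blast
    then show ?thesis using 2 by (simp add: conj_rel_def)
  qed
qed

lemma peq_t_degree: "peq Rl u w \<Longrightarrow> \<forall>r\<in>Rl. t_degree r = 0 \<Longrightarrow> t_degree u = t_degree w"
  by (induction rule: peq.induct) (auto simp: inv_letter_def)

definition t_degree_grp :: "'a word set \<Rightarrow> 'a grp \<Rightarrow> int" where
  "t_degree_grp Rl g = t_degree (SOME w. w \<in> g)"

lemma t_degree_grp_vcls:
  "\<forall>r\<in>Rl. t_degree r = 0 \<Longrightarrow> t_degree_grp Rl (vcls Rl w) = t_degree w"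
  unfolding t_degree_grp_def using peq_t_degree[OF peq_some_vcls] by metis

section \<open>The topology of the Cayley complex\<close>

declare canon.simps [simp del]

definition cayley_open :: "'a set \<Rightarrow> 'a word set \<Rightarrow> 'a xpt set \<Rightarrow> bool" where
  "cayley_open \<A> Rl = (\<lambda>U. U \<subseteq> canon Rl ` cells_carrier \<A> Rl \<and>
     (\<forall>g\<in>grp_carrier \<A> Rl. \<forall>x\<in>gens \<A>.
        openin (top_of_set {0..1}) {s \<in> {0..1}. canon Rl (Edg g x s) \<in> U}) \<and>
     (\<forall>g\<in>grp_carrier \<A> Rl. \<forall>r\<in>Rl.
        openin (top_of_set (cball 0 1)) {z \<in> cball 0 1. canon Rl (Cel g r z) \<in> U}))"

lemma istopology_cayley_open: "istopology (cayley_open \<A> Rl)"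
  unfolding istopology_def
proof (intro conjI allI impI)
  fix S T assume "cayley_open \<A> Rl S" "cayley_open \<A> Rl T"
  moreover have "{s \<in> {0..1}. canon Rl (Edg g x s) \<in> S \<inter> T} =
     {s \<in> {0..1}. canon Rl (Edg g x s) \<in> S} \<inter> {s \<in> {0..1}. canon Rl (Edg g x s) \<in> T}" for g x
    by auto
  moreover have "{z \<in> cball 0 1. canon Rl (Cel g r z) \<in> S \<inter> T} =
     {z \<in> cball 0 1. canon Rl (Cel g r z) \<in> S} \<inter> {z \<in> cball 0 1. canon Rl (Cel g r z) \<in> T}" for g r
    by auto
  ultimately show "cayley_open \<A> Rl (S \<inter> T)"
    unfolding cayley_open_def by (auto simp del: mem_cball intro!: openin_Int)
next
  fix K :: "'a xpt set set" assume "\<forall>S\<in>K. cayley_open \<A> Rl S"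
  moreover have "{s \<in> {0..1}. canon Rl (Edg g x s) \<in> \<Union>K} =
     (\<Union>S\<in>K. {s \<in> {0..1}. canon Rl (Edg g x s) \<in> S})" for g x
    by auto
  moreover have "{z \<in> cball 0 1. canon Rl (Cel g r z) \<in> \<Union>K} =
     (\<Union>S\<in>K. {z \<in> cball 0 1. canon Rl (Cel g r z) \<in> S})" for g r
    by auto
  ultimately show "cayley_open \<A> Rl (\<Union>K)"
    unfolding cayley_open_def by (auto simp del: mem_cball intro!: openin_Union)
qed

lemma openin_cayley_top: "openin (cayley_top \<A> Rl) U \<longleftrightarrow> cayley_open \<A> Rl U"
  unfolding cayley_top_def cayley_open_def[symmetric]
  using istopology_cayley_open[of \<A> Rl] by (simp only: topology_inverse')

lemma Edg_in_cells_carrier: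
  "g \<in> grp_carrier \<A> Rl \<Longrightarrow> x \<in> gens \<A> \<Longrightarrow> s \<in> {0..1} \<Longrightarrow> Edg g x s \<in> cells_carrier \<A> Rl"
  by (auto simp: cells_carrier_def)

lemma Cel_in_cells_carrier:
  "g \<in> grp_carrier \<A> Rl \<Longrightarrow> r \<in> Rl \<Longrightarrow> z \<in> cball 0 1 \<Longrightarrow> Cel g r z \<in> cells_carrier \<A> Rl"
  by (auto simp: cells_carrier_def)

lemma topspace_cayley_top: "topspace (cayley_top \<A> Rl) = canon Rl ` cells_carrier \<A> Rl"
proof
  show "topspace (cayley_top \<A> Rl) \<subseteq> canon Rl ` cells_carrier \<A> Rl"
    unfolding topspace_def openin_cayley_top cayley_open_def by auto
  have "{s \<in> {0..1}. canon Rl (Edg g x s) \<in> canon Rl ` cells_carrier \<A> Rl} = {0..1}"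
    if "g \<in> grp_carrier \<A> Rl" "x \<in> gens \<A>" for g x
    using Edg_in_cells_carrier[OF that] by auto
  moreover have "{z \<in> cball 0 1. canon Rl (Cel g r z) \<in> canon Rl ` cells_carrier \<A> Rl} = cball 0 1"
    if "g \<in> grp_carrier \<A> Rl" "r \<in> Rl" for g r
    using Cel_in_cells_carrier[OF that] by auto
  ultimately have "cayley_open \<A> Rl (canon Rl ` cells_carrier \<A> Rl)"
    unfolding cayley_open_def by simp
  then show "canon Rl ` cells_carrier \<A> Rl \<subseteq> topspace (cayley_top \<A> Rl)"
    by (metis openin_cayley_top openin_subset)
qed

lemma continuous_map_from_cayley_top:
  assumes edges: "\<And>g x. g \<in> grp_carrier \<A> Rl \<Longrightarrow> x \<in> gens \<A> \<Longrightarrow>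
      continuous_map (top_of_set {0..1}) Y (\<lambda>s. f (canon Rl (Edg g x s)))"
    and cells: "\<And>g r. g \<in> grp_carrier \<A> Rl \<Longrightarrow> r \<in> Rl \<Longrightarrow>
      continuous_map (top_of_set (cball 0 1)) Y (\<lambda>z. f (canon Rl (Cel g r z)))"
    and "f ` topspace (cayley_top \<A> Rl) \<subseteq> topspace Y"
  shows "continuous_map (cayley_top \<A> Rl) Y f"
  unfolding continuous_map_def
proof (intro conjI allI impI)
  show "f \<in> topspace (cayley_top \<A> Rl) \<rightarrow> topspace Y" using assms(3) by auto
  fix U assume U: "openin Y U"
  let ?V = "{x \<in> topspace (cayley_top \<A> Rl). f x \<in> U}"
  have "openin (top_of_set {0..1}) {s \<in> {0..1}. canon Rl (Edg g x s) \<in> ?V}"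
    if "g \<in> grp_carrier \<A> Rl" "x \<in> gens \<A>" for g x
  proof -
    have "{s \<in> {0..1}. canon Rl (Edg g x s) \<in> ?V} =
        {s \<in> topspace (top_of_set {0..1}). f (canon Rl (Edg g x s)) \<in> U}"
      using Edg_in_cells_carrier[OF that] by (auto simp: topspace_cayley_top)
    then show ?thesis using openin_continuous_map_preimage[OF edges[OF that] U] by simp
  qed
  moreover have "openin (top_of_set (cball 0 1)) {z \<in> cball 0 1. canon Rl (Cel g r z) \<in> ?V}"
    if "g \<in> grp_carrier \<A> Rl" "r \<in> Rl" for g r
  proof -
    have "{z \<in> cball 0 1. canon Rl (Cel g r z) \<in> ?V} =
        {z \<in> topspace (top_of_set (cball 0 1)). f (canon Rl (Cel g r z)) \<in> U}"
      using Cel_in_cells_carrier[OF that] by (auto simp: topspace_cayley_top)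
    then show ?thesis using openin_continuous_map_preimage[OF cells[OF that] U] by simp
  qed
  ultimately show "openin (cayley_top \<A> Rl) ?V"
    unfolding openin_cayley_top cayley_open_def by (auto simp: topspace_cayley_top)
qed

lemma bparam_bounds: "0 \<le> bparam z \<and> bparam z < 1"
  using Arg_bounded[of z] pi_gt_zero unfolding bparam_def by (auto simp: field_simps)

lemma bparam_cis: assumes "0 \<le> t" "t < 1" shows "bparam (cis (2*pi*t)) = t"
proof (cases "2*pi*t \<le> pi")
  case True
  moreover have "0 \<le> 2*pi*t" using assms by simp
  ultimately have "2*pi*t \<in> {-pi<..pi}"
    unfolding greaterThanAtMost_iff using pi_gt_zero by linarith
  then have "Arg (cis (2*pi*t)) = 2*pi*t" by (rule Arg_cis)
  then show ?thesis using \<open>0 \<le> 2*pi*t\<close> by (simp add: bparam_def)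
next
  case False
  have "cis (2*pi*t) = cis (2*pi*t - 2*pi)"
    by (metis cis_2pi cis_divide div_by_1)
  moreover have "Arg (cis (2*pi*t - 2*pi)) = 2*pi*t - 2*pi"
    using assms False pi_gt_zero by (intro Arg_cis) (auto simp: algebra_simps)
  moreover have "2*pi*t - 2*pi < 0" using assms pi_gt_zero by auto
  ultimately show ?thesis by (simp add: bparam_def)
qed

lemma cis_bparam: assumes "norm z = 1" shows "cis (2*pi*bparam z) = z"
proof -
  have "cis (2*pi*bparam z) = cis (Arg z)"
    by (cases "Arg z < 0") (simp_all add: bparam_def cis_mult[symmetric])
  also have "\<dots> = sgn z" using assms by (intro cis_Arg) auto
  also have "\<dots> = z" using assms by (simp add: sgn_eq)
  finally show ?thesis .
qed

lemma quotient_map_cis_circle: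
  "quotient_map (top_of_set {0..1::real}) (top_of_set (sphere (0::complex) 1)) (\<lambda>t. cis (2*pi*t))"
proof (rule continuous_imp_quotient_map)
  show "continuous_map (top_of_set {0..1::real}) (top_of_set (sphere (0::complex) 1)) (\<lambda>t. cis (2*pi*t))"
    by (auto simp: continuous_map_in_subtopology intro!: continuous_intros)
  have "z \<in> (\<lambda>t. cis (2*pi*t)) ` {0..1}" if "z \<in> sphere 0 1" for z
    using bparam_bounds[of z] cis_bparam[of z] that by (intro rev_image_eqI[of "bparam z"]) auto
  then show "(\<lambda>t. cis (2*pi*t)) ` topspace (top_of_set {0..1::real}) = topspace (top_of_set (sphere (0::complex) 1))"
    by auto
qed (simp_all add: compact_space_subtopology Hausdorff_space_subtopology)

lemma continuous_on_sphere_via_cis: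
  fixes B :: "complex \<Rightarrow> real"
  assumes "continuous_on {0..1} (\<lambda>t. B (cis (2*pi*t)))"
  shows "continuous_on (sphere 0 1) B"
  using continuous_compose_quotient_map[OF quotient_map_cis_circle, of euclidean B] assms
  by (simp add: o_def)

lemma continuous_on_radial_extension:
  fixes B :: "complex \<Rightarrow> real"
  assumes B: "continuous_on (sphere 0 1) B"
  shows "continuous_on (cball 0 1) (\<lambda>z. norm z * B (sgn z))"
proof -
  obtain M0 where "\<And>w. w \<in> sphere 0 1 \<Longrightarrow> \<bar>B w\<bar> \<le> M0"
    using compact_imp_bounded[OF compact_continuous_image[OF B compact_sphere]]
    unfolding bounded_iff by fastforce
  then obtain M where M: "\<And>w. w \<in> sphere 0 1 \<Longrightarrow> \<bar>B w\<bar> \<le> M" and "M \<ge> 0"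
    by (meson max.cobounded1 max.cobounded2 order_trans)
  have away_0: "continuous_on (- {0}) (\<lambda>z. norm z * B (sgn z))"
    by (intro continuous_intros continuous_on_compose2[OF B]) (auto simp: norm_sgn split: if_splits)
  have "((\<lambda>z. norm z * B (sgn z)) \<longlongrightarrow> 0) (at 0 within cball 0 1)"
  proof (rule Lim_null_comparison)
    have "norm (norm x * B (sgn x)) \<le> norm x * M" for x :: complex
      using M[of "sgn x"] by (cases "x = 0") (simp_all add: abs_mult norm_sgn mult_left_mono)
    then show "\<forall>\<^sub>F x in at 0 within cball 0 1. norm (norm x * B (sgn x)) \<le> norm x * M"
      by simp
    show "((\<lambda>x::complex. norm x * M) \<longlongrightarrow> 0) (at 0 within cball 0 1)"
      by (auto intro!: tendsto_eq_intros)
  qed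
  then have at_0: "continuous (at 0 within cball 0 1) (\<lambda>z. norm z * B (sgn z))"
    by (simp add: continuous_within)
  have "continuous (at z within cball 0 1) (\<lambda>z. norm z * B (sgn z))" for z
  proof (cases "z = 0")
    case False
    then show ?thesis using away_0
      by (simp add: continuous_on_eq_continuous_at open_Compl continuous_at_imp_continuous_within)
  qed (use at_0 in simp)
  then show ?thesis unfolding continuous_on_eq_continuous_within by blast
qed

lemma canon_edge_0 [simp]: "canon_edge Rl g x 0 = Vtx g"
  and canon_edge_1 [simp]: "canon_edge Rl g x 1 = Vtx (gmul Rl g (x, False))"
  by (simp_all add: canon_edge_def)

lemma oe_pt_0: "oe_pt Rl (vcls Rl w, l) 0 = Vtx (vcls Rl w)"
proof (cases "snd l")
  case True
  then have "(fst l, False) = inv_letter l" by (simp add: inv_letter_def)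
  then show ?thesis using True by (simp add: oe_pt_def gmul_inv_letter_vcls)
qed (simp add: oe_pt_def)

lemma oe_pt_1: "oe_pt Rl (u, l) 1 = Vtx (gmul Rl u l)"
proof (cases "snd l")
  case False
  then have "(fst l, False) = l" by (cases l) auto
  then show ?thesis using False by (simp add: oe_pt_def)
qed (simp add: oe_pt_def)

lemma oe_pt_eq_canon: "oe_pt Rl (u, l) s =
   canon Rl (Edg (if snd l then gmul Rl u l else u) (fst l) (if snd l then 1 - s else s))"
  by (simp add: oe_pt_def canon.simps)

lemma attach_eq_oe_pt:
  assumes "r \<noteq> []" "real j \<le> real (length r) * \<theta>" "real (length r) * \<theta> < real j + 1"
  shows "attach Rl g r \<theta> = oe_pt Rl (gmulw Rl g (take j r), r ! j) (real (length r) * \<theta> - real j)"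
proof -
  have "nat \<lfloor>real (length r) * \<theta>\<rfloor> = j" using assms(2,3) by linarith
  then show ?thesis using assms(1) unfolding attach_def Let_def by simp
qed

lemma continuous_on_oe_pt:
  assumes "\<And>h x. continuous_on {0..1} (\<lambda>s. f (canon Rl (Edg h x s)))"
    and "\<sigma> ` S \<subseteq> {0..1}" and "continuous_on S \<sigma>"
  shows "continuous_on S (\<lambda>t. f (oe_pt Rl (u, l) (\<sigma> t)))"
proof (cases "snd l")
  case True
  have "continuous_on S (\<lambda>t. f (canon Rl (Edg (gmul Rl u l) (fst l) (1 - \<sigma> t))))"
    using assms by (intro continuous_on_compose2[OF assms(1)]) (auto intro!: continuous_intros)
  then show ?thesis using True by (simp add: oe_pt_eq_canon)
next
  case False
  have "continuous_on S (\<lambda>t. f (canon Rl (Edg u (fst l) (\<sigma> t))))"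
    using assms by (intro continuous_on_compose2[OF assms(1)]) auto
  then show ?thesis using False by (simp add: oe_pt_eq_canon)
qed

lemma atLeastAtMost_01_eq_UN:
  assumes "n > 0"
  shows "{0..1::real} = (\<Union>j<n. {real j / real n .. (real j + 1) / real n})"
proof
  show "{0..1} \<subseteq> (\<Union>j<n. {real j / real n .. (real j + 1) / real n})"
  proof
    fix t :: real assume t: "t \<in> {0..1}"
    define j where "j = (if t = 1 then n - 1 else nat \<lfloor>real n * t\<rfloor>)"
    have "j < n \<and> real j \<le> real n * t \<and> real n * t \<le> real j + 1"
    proof (cases "t = 1")
      case False
      then have "real n * t < real n" using t assms by simp
      then show ?thesis using t False unfolding j_def by (simp add: nat_less_iff) linarith
    qed (use assms in \<open>simp add: j_def of_nat_diff\<close>)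
    then show "t \<in> (\<Union>j<n. {real j / real n .. (real j + 1) / real n})"
      using assms by (auto simp: field_simps)
  qed
  show "(\<Union>j<n. {real j / real n .. (real j + 1) / real n}) \<subseteq> {0..1}"
  proof (rule UN_least)
    fix j assume "j \<in> {..<n}"
    then have "(real j + 1) / real n \<le> 1" using assms by (simp add: field_simps)
    moreover have "0 \<le> real j / real n" by simp
    ultimately show "{real j / real n .. (real j + 1) / real n} \<subseteq> {0..1}" by auto
  qed
qed

text \<open>On the \<open>j\<close>-th arc the boundary of a 2-cell runs along the \<open>j\<close>-th edge of its relator; at
  the end of the last arc this uses that the relator is trivial in the group.\<close>

lemma attach_cis_eq_oe_pt:
  assumes r: "r \<in> Rl" "r \<noteq> []" and j: "j < length r"
    and t: "real j \<le> real (length r) * t" "real (length r) * t \<le> real j + 1"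
  shows "attach Rl (vcls Rl w) r (bparam (cis (2*pi*t))) =
    oe_pt Rl (vcls Rl (w @ take j r), r ! j) (real (length r) * t - real j)"
proof -
  let ?n = "length r"
  have "0 \<le> real ?n * t" using t(1) of_nat_0_le_iff order_trans by blast
  then have "0 \<le> t" using j by (auto simp: zero_le_mult_iff)
  have jn: "real j + 1 \<le> real ?n" using j by (metis Suc_leI add.commute of_nat_Suc of_nat_le_iff)
  show ?thesis
  proof (cases "real ?n * t < real j + 1")
    case True
    then have "real ?n * t < real ?n" using jn by linarith
    then have "t < 1" by (simp add: mult_less_cancel_left2)
    then show ?thesis using attach_eq_oe_pt[OF r(2) t(1) True] \<open>0 \<le> t\<close>
      by (simp add: bparam_cis gmulw_vcls)
  next
    case False
    then have end_t: "real ?n * t = real (Suc j)" using t by simp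
    have end_pt: "oe_pt Rl (vcls Rl (w @ take j r), r ! j) (real ?n * t - real j) =
        Vtx (vcls Rl (w @ take (Suc j) r))"
      using end_t j by (simp add: oe_pt_1 gmul_vcls take_Suc_conv_app_nth)
    show ?thesis
    proof (cases "Suc j < ?n")
      case True
      then have "real ?n * t < real ?n" using end_t by simp
      then have "t < 1" by (simp add: mult_less_cancel_left2)
      then show ?thesis
        using end_pt end_t attach_eq_oe_pt[OF r(2), of "Suc j" t] \<open>0 \<le> t\<close>
        by (simp add: bparam_cis gmulw_vcls oe_pt_0)
    next
      case False
      then have "Suc j = ?n" using j by simp
      then have "t = 1" using end_t r(2) by simp
      moreover have "peq Rl w (w @ r)" using peq.sym[OF peq.rel[OF r(1), of w "[]"]] by simp
      ultimately show ?thesis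
        using end_pt \<open>Suc j = ?n\<close> attach_eq_oe_pt[OF r(2), of 0 0]
        by (simp add: bparam_def gmulw_vcls oe_pt_0 vcls_eq_iff)
    qed
  qed
qed

lemma continuous_on_attach_cis:
  assumes "\<And>h x. continuous_on {0..1} (\<lambda>s. f (canon Rl (Edg h x s)))" and "r \<in> Rl"
  shows "continuous_on {0..1} (\<lambda>t. f (attach Rl (vcls Rl w) r (bparam (cis (2*pi*t)))))"
proof (cases "r = []")
  case False
  let ?n = "length r"
  let ?I = "\<lambda>j::nat. {real j / real ?n .. (real j + 1) / real ?n}"
  have "continuous_on (?I j) (\<lambda>t. f (attach Rl (vcls Rl w) r (bparam (cis (2*pi*t)))))"
    if j: "j < ?n" for j
  proof (rule continuous_on_eq)
    show "continuous_on (?I j) (\<lambda>t. f (oe_pt Rl (vcls Rl (w @ take j r), r ! j) (real ?n * t - real j)))"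
      using False by (intro continuous_on_oe_pt[OF assms(1)]) (auto simp: field_simps intro!: continuous_intros)
    show "f (oe_pt Rl (vcls Rl (w @ take j r), r ! j) (real ?n * t - real j)) =
        f (attach Rl (vcls Rl w) r (bparam (cis (2*pi*t))))" if "t \<in> ?I j" for t
      using that False attach_cis_eq_oe_pt[OF assms(2) False j, of t] by (simp add: field_simps)
  qed
  moreover have "{0..1} = (\<Union>j<?n. ?I j)" using False by (intro atLeastAtMost_01_eq_UN) simp
  ultimately show ?thesis by (auto intro: continuous_on_closed_Union)
qed (simp add: attach_def)

subsection \<open>The Cayley complex is Hausdorff\<close>

text \<open>Coordinates on the cells (a tent function per vertex, two bumps per edge, three per open
  2-cell) define a continuous injection into a product of real lines.\<close>

definition is_cell_point :: "('v,'l,'r) cpt \<Rightarrow> bool" where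
  "is_cell_point p = (case p of Cel _ _ _ \<Rightarrow> True | _ \<Rightarrow> False)"

lemma not_is_cell_point_canon_edge: "\<not> is_cell_point (canon_edge Rl g x s)"
  by (simp add: canon_edge_def is_cell_point_def)

lemma not_is_cell_point_oe_pt: "\<not> is_cell_point (oe_pt Rl e s)"
  by (simp add: oe_pt_def Let_def not_is_cell_point_canon_edge)

lemma not_is_cell_point_attach: "\<not> is_cell_point (attach Rl g r \<theta>)"
proof (cases "r = []")
  case False
  then show ?thesis unfolding attach_def Let_def using not_is_cell_point_oe_pt by (simp only: if_False)
qed (simp add: attach_def is_cell_point_def)

definition cone_ext :: "'a word set \<Rightarrow> ('a xpt \<Rightarrow> real) \<Rightarrow> 'a xpt \<Rightarrow> real" where
  "cone_ext Rl f p = (case p of Cel g r z \<Rightarrow> norm z * f (attach Rl g r (bparam (sgn z))) | _ \<Rightarrow> f p)"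

lemma cone_ext_not_cell: "\<not> is_cell_point p \<Longrightarrow> cone_ext Rl f p = f p"
  by (cases p) (auto simp: cone_ext_def is_cell_point_def)

lemma continuous_map_cone_ext:
  assumes edges: "\<And>h x. continuous_on {0..1} (\<lambda>s. f (canon Rl (Edg h x s)))"
  shows "continuous_map (cayley_top \<A> Rl) euclidean (cone_ext Rl f)"
proof (rule continuous_map_from_cayley_top)
  fix g x
  show "continuous_map (top_of_set {0..1}) euclidean (\<lambda>s. cone_ext Rl f (canon Rl (Edg g x s)))"
    using edges[of g x] by (simp add: canon.simps cone_ext_not_cell not_is_cell_point_canon_edge)
next
  fix g r assume "g \<in> grp_carrier \<A> Rl" and r: "r \<in> Rl"
  then obtain w where w: "g = vcls Rl w" by (auto simp: grp_carrier_def)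
  have "continuous_on (sphere 0 1) (\<lambda>z. f (attach Rl g r (bparam z)))"
    unfolding w by (intro continuous_on_sphere_via_cis continuous_on_attach_cis[OF edges r])
  then have "continuous_on (cball 0 1) (\<lambda>z. norm z * f (attach Rl g r (bparam (sgn z))))"
    by (rule continuous_on_radial_extension)
  moreover have "norm z * f (attach Rl g r (bparam (sgn z))) = cone_ext Rl f (canon Rl (Cel g r z))"
    for z
  proof (cases "norm z = 1")
    case True
    then show ?thesis by (simp add: canon.simps sgn_eq cone_ext_not_cell not_is_cell_point_attach)
  qed (simp add: canon.simps cone_ext_def)
  ultimately show "continuous_map (top_of_set (cball 0 1)) euclidean (\<lambda>z. cone_ext Rl f (canon Rl (Cel g r z)))"
    by simp
qed simp

definition vertex_coord :: "'a word set \<Rightarrow> 'a grp \<Rightarrow> 'a xpt \<Rightarrow> real" where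
  "vertex_coord Rl g p = (case p of Vtx h \<Rightarrow> if h = g then 1 else 0
     | Edg h x s \<Rightarrow> (if h = g then 1 - s else 0) + (if gmul Rl h (x, False) = g then s else 0)
     | Cel _ _ _ \<Rightarrow> 0)"

definition edge_coord :: "nat \<Rightarrow> 'a grp \<times> 'a option \<Rightarrow> 'a xpt \<Rightarrow> real" where
  "edge_coord i e p = (case p of Edg h x s \<Rightarrow> if (h, x) = e then s ^ Suc i * (1 - s) else 0 | _ \<Rightarrow> 0)"

definition cell_coord :: "'a grp \<times> 'a word \<Rightarrow> nat \<Rightarrow> 'a xpt \<Rightarrow> real" where
  "cell_coord c k p = (case p of Cel g r z \<Rightarrow>
     if (g, r) = c \<and> norm z < 1 then (1 - norm z) * (if k = 0 then 1 else if k = 1 then Re z else Im z) else 0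
   | _ \<Rightarrow> 0)"

lemma continuous_on_vertex_coord_edge: "continuous_on {0..1} (\<lambda>s. vertex_coord Rl g (canon Rl (Edg h x s)))"
proof -
  have "vertex_coord Rl g (canon Rl (Edg h x s)) =
      (if h = g then 1 - s else 0) + (if gmul Rl h (x, False) = g then s else 0)" for s
    by (simp add: canon.simps canon_edge_def vertex_coord_def)
  then show ?thesis
    by (cases "h = g"; cases "gmul Rl h (x, False) = g") (simp_all add: continuous_intros)
qed

lemma continuous_on_edge_coord_edge: "continuous_on {0..1} (\<lambda>s. edge_coord i e (canon Rl (Edg h x s)))"
proof -
  have "edge_coord i e (canon Rl (Edg h x s)) = (if (h, x) = e then s ^ Suc i * (1 - s) else 0)" for s
    by (simp add: canon.simps canon_edge_def edge_coord_def)
  then show ?thesis by (cases "(h, x) = e") (simp_all add: continuous_intros)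
qed

lemma continuous_map_cell_coord: "continuous_map (cayley_top \<A> Rl) euclidean (cell_coord c k)"
proof (rule continuous_map_from_cayley_top)
  fix g x
  have "cell_coord c k (canon Rl (Edg g x s)) = 0" for s
    using not_is_cell_point_canon_edge[of Rl g x s]
    by (auto simp: canon.simps cell_coord_def is_cell_point_def split: cpt.splits)
  then show "continuous_map (top_of_set {0..1}) euclidean (\<lambda>s. cell_coord c k (canon Rl (Edg g x s)))"
    by simp
next
  fix g r
  have "continuous_on (cball 0 1)
     (\<lambda>z. if (g, r) = c then (1 - norm z) * (if k = 0 then 1 else if k = 1 then Re z else Im z) else 0)"
    by (cases "(g, r) = c"; cases "k = 0"; cases "k = 1") (auto intro!: continuous_intros)
  moreover have "(if (g, r) = c then (1 - norm z) * (if k = 0 then 1 else if k = 1 then Re z else Im z) else 0) =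
     cell_coord c k (canon Rl (Cel g r z))" if "z \<in> cball 0 1" for z
  proof (cases "norm z = 1")
    case True
    then show ?thesis using not_is_cell_point_attach[of Rl g r "bparam z"]
      by (auto simp: canon.simps cell_coord_def is_cell_point_def split: cpt.splits)
  qed (use that in \<open>auto simp: canon.simps cell_coord_def\<close>)
  ultimately have "continuous_on (cball 0 1) (\<lambda>z. cell_coord c k (canon Rl (Cel g r z)))"
    by (rule continuous_on_eq)
  then show "continuous_map (top_of_set (cball 0 1)) euclidean (\<lambda>z. cell_coord c k (canon Rl (Cel g r z)))"
    by simp
qed simp

type_synonym 'a cayley_coord = "'a grp + (nat \<times> 'a grp \<times> 'a option) + (('a grp \<times> 'a word) \<times> nat)"

definition cayley_embedding :: "'a word set \<Rightarrow> 'a xpt \<Rightarrow> 'a cayley_coord \<Rightarrow> real" where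
  "cayley_embedding Rl p = (\<lambda>i. case i of Inl g \<Rightarrow> cone_ext Rl (vertex_coord Rl g) p
     | Inr (Inl (j, e)) \<Rightarrow> cone_ext Rl (edge_coord j e) p
     | Inr (Inr (c, k)) \<Rightarrow> cell_coord c k p)"

lemma continuous_map_cayley_embedding:
  "continuous_map (cayley_top \<A> Rl) (product_topology (\<lambda>_. euclidean) UNIV) (cayley_embedding Rl)"
  unfolding continuous_map_componentwise_UNIV
proof
  fix i :: "'a cayley_coord"
  show "continuous_map (cayley_top \<A> Rl) euclidean (\<lambda>p. cayley_embedding Rl p i)"
  proof (cases i)
    case Inl
    then show ?thesis
      by (simp add: cayley_embedding_def continuous_map_cone_ext continuous_on_vertex_coord_edge)
  next
    case (Inr j)
    then show ?thesis
      by (cases j) (auto simp: cayley_embedding_def continuous_map_cell_coord split: prod.splits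
          intro!: continuous_map_cone_ext continuous_on_edge_coord_edge)
  qed
qed

lemma topspace_cayley_top_cases:
  assumes "p \<in> topspace (cayley_top \<A> Rl)"
  obtains g where "p = Vtx g"
  | g x s where "p = Edg g x s" "0 < s" "s < 1"
  | g r z where "p = Cel g r z" "norm z < 1"
proof -
  have oe: "(\<exists>h. oe_pt Rl e \<sigma> = Vtx h) \<or> (\<exists>h x s. oe_pt Rl e \<sigma> = Edg h x s \<and> 0 < s \<and> s < 1)"
    if "\<sigma> \<in> {0..1}" for e \<sigma>
    using that by (auto simp: oe_pt_def canon_edge_def Let_def)
  obtain c where c: "c \<in> cells_carrier \<A> Rl" "p = canon Rl c"
    using assms by (auto simp: topspace_cayley_top)
  consider g where "c = Vtx g" | g x s where "c = Edg g x s" "s \<in> {0..1}"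
    | g r z where "c = Cel g r z" "norm z < 1" | g r z where "c = Cel g r z" "norm z = 1"
    using c(1) by (auto simp: cells_carrier_def dest: le_imp_less_or_eq)
  then show ?thesis
  proof cases
    case (2 g x s)
    then show ?thesis using that c by (auto simp: canon.simps canon_edge_def split: if_splits)
  next
    case (4 g r z)
    then have p: "p = attach Rl g r (bparam z)" using c by (simp add: canon.simps)
    show ?thesis
    proof (cases "r = []")
      case False
      define j where "j = nat \<lfloor>real (length r) * bparam z\<rfloor>"
      have "real (length r) * bparam z - real j \<in> {0..1}"
        using bparam_bounds[of z] unfolding j_def by simp linarith
      moreover have "p = oe_pt Rl (gmulw Rl g (take j r), r ! j) (real (length r) * bparam z - real j)"
        using p False by (simp add: attach_def Let_def j_def)
      ultimately show ?thesis using oe that(1,2) by metis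
    qed (use p that(1) in \<open>simp add: attach_def\<close>)
  qed (use that c in \<open>auto simp: canon.simps\<close>)
qed

lemma cayley_embedding_Vtx:
  "cayley_embedding Rl (Vtx g) (Inl h) = (if g = h then 1 else 0)"
  "cayley_embedding Rl (Vtx g) (Inr (Inl (i, e))) = 0"
  "cayley_embedding Rl (Vtx g) (Inr (Inr (c, k))) = 0"
  by (simp_all add: cayley_embedding_def cone_ext_def vertex_coord_def edge_coord_def cell_coord_def)

lemma cayley_embedding_Edg:
  "cayley_embedding Rl (Edg g x s) (Inr (Inl (i, e))) = (if (g, x) = e then s ^ Suc i * (1 - s) else 0)"
  "cayley_embedding Rl (Edg g x s) (Inr (Inr (c, k))) = 0"
  by (simp_all add: cayley_embedding_def cone_ext_def edge_coord_def cell_coord_def)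

lemma cayley_embedding_Cel:
  "norm z < 1 \<Longrightarrow> cayley_embedding Rl (Cel g r z) (Inr (Inr (c, k))) =
   (if (g, r) = c then (1 - norm z) * (if k = 0 then 1 else if k = 1 then Re z else Im z) else 0)"
  by (simp add: cayley_embedding_def cell_coord_def)

lemma cayley_embedding_eq_Cel:
  assumes p: "p = Cel g r z" "norm z < 1" and q: "q \<in> topspace (cayley_top \<A> Rl)"
    and eq: "cayley_embedding Rl p = cayley_embedding Rl q"
  shows "p = q"
proof -
  have coord: "cayley_embedding Rl p (Inr (Inr ((g, r), k))) = cayley_embedding Rl q (Inr (Inr ((g, r), k)))"
    for k using eq by simp
  have pos: "cayley_embedding Rl p (Inr (Inr ((g, r), 0))) > 0"
    using p by (simp add: cayley_embedding_Cel)
  from q show ?thesis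
  proof (cases rule: topspace_cayley_top_cases)
    case (3 h r' z')
    have "(h, r') = (g, r) \<and> norm z = norm z'"
      using coord[of 0] pos p 3 by (auto simp: cayley_embedding_Cel split: if_splits)
    moreover have "Re z = Re z'" "Im z = Im z'"
      using coord[of 1] coord[of 2] p 3 calculation by (simp_all add: cayley_embedding_Cel)
    ultimately show ?thesis using p 3 by (simp add: complex_eqI)
  qed (use coord[of 0] pos in \<open>simp_all add: cayley_embedding_Vtx cayley_embedding_Edg\<close>)
qed

lemma cayley_embedding_eq_Edg:
  assumes p: "p = Edg g x s" "0 < s" "s < 1" and q: "q \<in> topspace (cayley_top \<A> Rl)"
    and eq: "cayley_embedding Rl p = cayley_embedding Rl q"
  shows "p = q"
proof -
  have coord: "cayley_embedding Rl p (Inr (Inl (i, (g, x)))) = cayley_embedding Rl q (Inr (Inl (i, (g, x))))"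
    for i using eq by simp
  have pos: "cayley_embedding Rl p (Inr (Inl (0, (g, x)))) > 0"
    using p by (simp add: cayley_embedding_Edg)
  from q show ?thesis
  proof (cases rule: topspace_cayley_top_cases)
    case (2 h x' s')
    have hx: "(h, x') = (g, x) \<and> s * (1 - s) = s' * (1 - s')"
      using coord[of 0] pos p 2 by (auto simp: cayley_embedding_Edg split: if_splits)
    moreover have "s * (s * (1 - s)) = s' * (s' * (1 - s'))"
      using coord[of 1] p 2 hx by (simp add: cayley_embedding_Edg power2_eq_square mult.assoc)
    then have "s * (s * (1 - s)) = s' * (s * (1 - s))" using hx by simp
    moreover have "s * (1 - s) \<noteq> 0" using p by simp
    ultimately have "s = s'" by simp
    then show ?thesis using p 2 hx by simp
  next
    case (3 h r z)
    then show ?thesis using fun_cong[OF eq, of "Inr (Inr ((h, r), 0))"] p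
      by (simp add: cayley_embedding_Edg cayley_embedding_Cel)
  qed (use coord[of 0] pos in \<open>simp_all add: cayley_embedding_Vtx\<close>)
qed

lemma inj_on_cayley_embedding: "inj_on (cayley_embedding Rl) (topspace (cayley_top \<A> Rl))"
proof (rule inj_onI)
  fix p q assume p: "p \<in> topspace (cayley_top \<A> Rl)" and q: "q \<in> topspace (cayley_top \<A> Rl)"
    and eq: "cayley_embedding Rl p = cayley_embedding Rl q"
  from p show "p = q"
  proof (cases rule: topspace_cayley_top_cases)
    case (1 g)
    from q show ?thesis
    proof (cases rule: topspace_cayley_top_cases)
      case (1 h)
      then show ?thesis using fun_cong[OF eq, of "Inl g"] \<open>p = Vtx g\<close>
        by (auto simp: cayley_embedding_Vtx split: if_splits)
    next
      case 2
      then show ?thesis using cayley_embedding_eq_Edg[OF 2 p eq[symmetric]] by simp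
    next
      case 3
      then show ?thesis using cayley_embedding_eq_Cel[OF 3 p eq[symmetric]] by simp
    qed
  next
    case 2
    then show ?thesis by (rule cayley_embedding_eq_Edg[OF _ _ _ q eq])
  next
    case 3
    then show ?thesis by (rule cayley_embedding_eq_Cel[OF _ _ q eq])
  qed
qed

lemma Hausdorff_space_cayley_top: "Hausdorff_space (cayley_top \<A> Rl)"
  by (rule Hausdorff_space_injective_preimage[OF _ continuous_map_cayley_embedding inj_on_cayley_embedding])
    (simp add: Hausdorff_space_product_topology)

subsection \<open>Compact sets meet only finitely many cells\<close>

definition base_vertex :: "('v,'l,'r) cpt \<Rightarrow> 'v" where
  "base_vertex p = (case p of Vtx g \<Rightarrow> g | Edg g _ _ \<Rightarrow> g | Cel g _ _ \<Rightarrow> g)"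

lemma base_vertex_simps [simp]:
  "base_vertex (Vtx g) = g" "base_vertex (Edg g x s) = g" "base_vertex (Cel g r z) = g"
  by (simp_all add: base_vertex_def)

lemma finite_base_vertex_fibre: "inj_on base_vertex T \<Longrightarrow> finite {p \<in> T. base_vertex p = g}"
  by (rule finite_subset[of _ "{the_inv_into T base_vertex g}"]) (auto simp: the_inv_into_f_eq)

lemma finite_Edg_preimage: "inj_on base_vertex T \<Longrightarrow> finite {s. Edg g x s \<in> T}"
proof -
  assume "inj_on base_vertex T"
  then have "finite (Edg g x -` {p \<in> T. base_vertex p = g})"
    by (intro finite_vimageI finite_base_vertex_fibre) (auto intro: injI)
  then show ?thesis by (simp add: vimage_def)
qed

lemma finite_Cel_preimage: "inj_on base_vertex T \<Longrightarrow> finite {z. Cel g r z \<in> T}"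
proof -
  assume "inj_on base_vertex T"
  then have "finite (Cel g r -` {p \<in> T. base_vertex p = g})"
    by (intro finite_vimageI finite_base_vertex_fibre) (auto intro: injI)
  then show ?thesis by (simp add: vimage_def)
qed

lemma finite_canon_edge_preimage: "inj_on base_vertex T \<Longrightarrow> finite {s. canon_edge Rl h x s \<in> T}"
  by (rule finite_subset[of _ "{0, 1} \<union> {s. Edg h x s \<in> T}"])
    (auto simp: canon_edge_def finite_Edg_preimage)

lemma finite_oe_pt_preimage: "inj_on base_vertex T \<Longrightarrow> finite {\<sigma>. oe_pt Rl (u, l) \<sigma> \<in> T}"
proof -
  assume T: "inj_on base_vertex T"
  let ?h = "if snd l then gmul Rl u l else u"
  let ?m = "\<lambda>s::real. if snd l then 1 - s else s"
  have "{\<sigma>. oe_pt Rl (u, l) \<sigma> \<in> T} \<subseteq> ?m ` {s. canon_edge Rl ?h (fst l) s \<in> T}"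
  proof
    fix \<sigma> assume "\<sigma> \<in> {\<sigma>. oe_pt Rl (u, l) \<sigma> \<in> T}"
    then have "canon_edge Rl ?h (fst l) (?m \<sigma>) \<in> T" by (simp add: oe_pt_eq_canon canon.simps)
    moreover have "\<sigma> = ?m (?m \<sigma>)" by simp
    ultimately show "\<sigma> \<in> ?m ` {s. canon_edge Rl ?h (fst l) s \<in> T}" by blast
  qed
  then show ?thesis using finite_canon_edge_preimage[OF T] finite_subset by blast
qed

lemma finite_attach_preimage:
  assumes T: "inj_on base_vertex T" and r: "r \<noteq> []"
  shows "finite {\<theta> \<in> {0..<1}. attach Rl g r \<theta> \<in> T}"
proof -
  let ?n = "length r"
  let ?S = "\<lambda>j. {\<sigma>. oe_pt Rl (gmulw Rl g (take j r), r ! j) \<sigma> \<in> T}"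
  have "{\<theta> \<in> {0..<1}. attach Rl g r \<theta> \<in> T} \<subseteq> (\<Union>j<?n. (\<lambda>\<sigma>. (\<sigma> + real j) / real ?n) ` ?S j)"
  proof
    fix \<theta> assume \<theta>: "\<theta> \<in> {\<theta> \<in> {0..<1}. attach Rl g r \<theta> \<in> T}"
    define j where "j = nat \<lfloor>real ?n * \<theta>\<rfloor>"
    have "0 \<le> real ?n * \<theta>" using \<theta> by simp
    then have j: "real j \<le> real ?n * \<theta>" "real ?n * \<theta> < real j + 1" unfolding j_def by linarith+
    moreover have "real ?n * \<theta> < real ?n" using \<theta> r by simp
    ultimately have "j < ?n" by linarith
    moreover have "real ?n * \<theta> - real j \<in> ?S j" using \<theta> attach_eq_oe_pt[OF r j] by simp
    moreover have "\<theta> = ((real ?n * \<theta> - real j) + real j) / real ?n" using r by simp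
    ultimately show "\<theta> \<in> (\<Union>j<?n. (\<lambda>\<sigma>. (\<sigma> + real j) / real ?n) ` ?S j)" by blast
  qed
  moreover have "finite (\<Union>j<?n. (\<lambda>\<sigma>. (\<sigma> + real j) / real ?n) ` ?S j)"
    using finite_oe_pt_preimage[OF T] by auto
  ultimately show ?thesis using finite_subset by blast
qed

lemma closed_Cel_preimage:
  assumes T: "inj_on base_vertex T"
  shows "closed {z \<in> cball 0 1. canon Rl (Cel g r z) \<in> T}"
proof -
  let ?A = "{z. Cel g r z \<in> T} \<inter> cball 0 1 - sphere 0 1"
  let ?B = "{z \<in> sphere 0 1. attach Rl g r (bparam z) \<in> T}"
  have "{z \<in> cball 0 1. canon Rl (Cel g r z) \<in> T} = ?A \<union> ?B"
    by (auto simp: canon.simps)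
  moreover have "closed ?A"
    using finite_Cel_preimage[OF T] by (intro finite_imp_closed) auto
  moreover have "closed ?B"
  proof (cases "r = []")
    case True
    have "closed {z::complex. norm z = 1}" using closed_sphere[of 0 1] by (simp add: sphere_def)
    then show ?thesis using True by (cases "Vtx g \<in> T") (simp_all add: attach_def)
  next
    case False
    have "?B \<subseteq> bparam -` {\<theta> \<in> {0..<1}. attach Rl g r \<theta> \<in> T} \<inter> sphere 0 1"
      using bparam_bounds by auto
    moreover have "inj_on bparam (sphere 0 1)"
      by (rule inj_onI) (metis cis_bparam mem_sphere_0)
    then have "finite (bparam -` {\<theta> \<in> {0..<1}. attach Rl g r \<theta> \<in> T} \<inter> sphere 0 1)"
      by (intro finite_vimage_IntI finite_attach_preimage[OF T False])
    ultimately show ?thesis using finite_subset finite_imp_closed by blast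
  qed
  ultimately show ?thesis by (simp add: closed_Un)
qed

lemma closed_Edg_preimage:
  "inj_on base_vertex T \<Longrightarrow> closed {s \<in> {0..1}. canon Rl (Edg g x s) \<in> T}"
  by (rule finite_imp_closed, rule finite_subset[OF _ finite_canon_edge_preimage])
    (auto simp: canon.simps)

lemma openin_diff_closed: "closed F \<Longrightarrow> openin (top_of_set S) (S - F)"
  using openin_open_Int[OF open_Compl, of F S] by (simp add: Diff_eq Int_commute)

lemma closedin_if_inj_on_base_vertex:
  assumes "T \<subseteq> topspace (cayley_top \<A> Rl)" "inj_on base_vertex T"
  shows "closedin (cayley_top \<A> Rl) T"
  unfolding closedin_def
proof
  let ?V = "topspace (cayley_top \<A> Rl) - T"
  have "{s \<in> {0..1}. canon Rl (Edg g x s) \<in> ?V} = {0..1} - {s \<in> {0..1}. canon Rl (Edg g x s) \<in> T}"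
    if "g \<in> grp_carrier \<A> Rl" "x \<in> gens \<A>" for g x
    using Edg_in_cells_carrier[OF that] by (auto simp: topspace_cayley_top simp del: canon.simps)
  moreover have "{z \<in> cball 0 1. canon Rl (Cel g r z) \<in> ?V} = cball 0 1 - {z \<in> cball 0 1. canon Rl (Cel g r z) \<in> T}"
    if "g \<in> grp_carrier \<A> Rl" "r \<in> Rl" for g r
    using Cel_in_cells_carrier[OF that] by (auto simp: topspace_cayley_top simp del: canon.simps)
  ultimately show "openin (cayley_top \<A> Rl) ?V"
    unfolding openin_cayley_top cayley_open_def
    using openin_diff_closed[OF closed_Edg_preimage[OF assms(2)]]
      openin_diff_closed[OF closed_Cel_preimage[OF assms(2)]]
    by (auto simp: topspace_cayley_top)
qed (rule assms(1))

lemma finite_if_closedin_subsets: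
  assumes K: "compactin X K" and S: "S \<subseteq> K" and closed: "\<And>T. T \<subseteq> S \<Longrightarrow> closedin X T"
  shows "finite S"
proof (rule ccontr)
  assume "infinite S"
  then have "K \<inter> X derived_set_of S \<noteq> {}"
    using compactin_imp_Bolzano_Weierstrass[OF K] S by blast
  then obtain x where x: "x \<in> X derived_set_of S" by blast
  then have lim: "\<And>T. x \<in> T \<Longrightarrow> openin X T \<Longrightarrow> \<exists>y\<noteq>x. y \<in> S \<and> y \<in> T"
    by (auto simp: in_derived_set_of)
  have "closedin X (S - {x})" by (rule closed) blast
  then have "openin X (topspace X - (S - {x}))" by (rule closedin_def[THEN iffD1, THEN conjunct2])
  moreover have "x \<in> topspace X - (S - {x})"
    using subsetD[OF derived_set_of_subset_topspace x] by simp
  ultimately obtain y where "y \<noteq> x" "y \<in> S" "y \<in> topspace X - (S - {x})"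
    using lim by meson
  then show False by simp
qed
lemma finite_base_vertex_compactin:
  assumes K: "compactin (cayley_top \<A> Rl) K"
  shows "finite (base_vertex ` K)"
proof -
  define S where "S = inv_into K base_vertex ` base_vertex ` K"
  have SK: "S \<subseteq> K" by (auto simp: S_def inv_into_into)
  have bv: "base_vertex (inv_into K base_vertex g) = g" if "g \<in> base_vertex ` K" for g
    using that by (rule f_inv_into_f)
  have inj: "inj_on base_vertex S"
  proof (rule inj_onI)
    fix p q assume "p \<in> S" "q \<in> S" "base_vertex p = base_vertex q"
    then show "p = q" unfolding S_def using bv by auto
  qed
  have "S \<subseteq> topspace (cayley_top \<A> Rl)" using SK compactin_subset_topspace[OF K] by blast
  then have "finite S"
    using inj by (intro finite_if_closedin_subsets[OF K SK] closedin_if_inj_on_base_vertex)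
      (auto intro: inj_on_subset)
  moreover have "base_vertex ` S = base_vertex ` K" unfolding S_def image_image using bv by simp
  ultimately show ?thesis by (metis finite_imageI)
qed

section \<open>Vertices of the strips\<close>

text \<open>The base vertices of the points on the edge path reading \<open>W\<close> from \<open>vcls Rl w\<close> are the
  elements \<open>vcls Rl (w @ y)\<close> with \<open>vertex_offset W y\<close>; the third kind of offset arises because the
  edge of an inverse letter is based at its far end.\<close>

definition vertex_offset :: "'a word \<Rightarrow> 'a word \<Rightarrow> bool" where
  "vertex_offset W y \<longleftrightarrow> y = [] \<or>
     (\<exists>j<length W. y \<in> {take j W, take j W @ [W ! j], take j W @ [W ! j, (fst (W ! j), False)]})"

lemma base_vertex_canon_edge: "base_vertex (canon_edge Rl h x s) \<in> {h, gmul Rl h (x, False)}"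
  by (simp add: canon_edge_def)

lemma base_vertex_oe_pt:
  "base_vertex (oe_pt Rl (vcls Rl w, l) \<sigma>) \<in> (\<lambda>y. vcls Rl (w @ y)) ` {y. vertex_offset [l] y}"
proof -
  have "base_vertex (oe_pt Rl (vcls Rl w, l) \<sigma>) \<in> (\<lambda>y. vcls Rl (w @ y)) ` {[], [l], [l, (fst l, False)]}"
  proof (cases "snd l")
    case True
    then show ?thesis using base_vertex_canon_edge[of Rl "gmul Rl (vcls Rl w) l" "fst l" "1 - \<sigma>"]
      by (auto simp: oe_pt_def gmul_vcls)
  next
    case False
    then have "(fst l, False) = l" by (cases l) auto
    then show ?thesis using False base_vertex_canon_edge[of Rl "vcls Rl w" "fst l" \<sigma>]
      by (auto simp: oe_pt_def gmul_vcls intro: image_eqI[where x="[]"])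
  qed
  moreover have "{[], [l], [l, (fst l, False)]} \<subseteq> {y. vertex_offset [l] y}"
    by (auto simp: vertex_offset_def)
  ultimately show ?thesis by blast
qed

lemma base_vertex_word_path:
  "base_vertex (word_path Rl (vcls Rl w) W t) \<in> (\<lambda>y. vcls Rl (w @ y)) ` {y. vertex_offset W y}"
proof (cases "W = []")
  case False
  define j where "j = min (nat \<lfloor>real (length W) * t\<rfloor>) (length W - 1)"
  have j: "j < length W" using False unfolding j_def by (simp add: min_less_iff_disj)
  have "word_path Rl (vcls Rl w) W t = oe_pt Rl (vcls Rl (w @ take j W), W ! j) (real (length W) * t - real j)"
    using False by (simp add: word_path_def Let_def j_def gmulw_vcls)
  then show ?thesis
    using base_vertex_oe_pt[of Rl "w @ take j W" "W ! j"] j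
    by (fastforce simp: vertex_offset_def)
qed (auto simp: word_path_def vertex_offset_def intro: image_eqI[where x="[]"])

lemma base_vertex_closed_cell:
  assumes "p \<in> closed_cell Rl (vcls Rl w) r"
  shows "base_vertex p \<in> (\<lambda>y. vcls Rl (w @ y)) ` {y. vertex_offset r y}"
proof -
  obtain z where z: "norm z \<le> 1" "p = canon Rl (Cel (vcls Rl w) r z)"
    using assms by (auto simp: closed_cell_def)
  show ?thesis
  proof (cases "norm z = 1 \<and> r \<noteq> []")
    case True
    define j where "j = nat \<lfloor>real (length r) * bparam z\<rfloor>"
    have "real (length r) * bparam z < real (length r)" using bparam_bounds[of z] True by simp
    moreover have "0 \<le> real (length r) * bparam z" using bparam_bounds[of z] by simp
    ultimately have j: "j < length r" unfolding j_def by linarith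
    have "p = oe_pt Rl (vcls Rl (w @ take j r), r ! j) (real (length r) * bparam z - real j)"
      using z True by (simp add: canon.simps attach_def Let_def j_def gmulw_vcls)
    then show ?thesis
      using base_vertex_oe_pt[of Rl "w @ take j r" "r ! j"] j
      by (fastforce simp: vertex_offset_def)
  qed (use z in \<open>auto simp: canon.simps attach_def vertex_offset_def intro: image_eqI[where x="[]"]\<close>)
qed

definition max_phi_length :: "'a set \<Rightarrow> ('a \<Rightarrow> 'a word) \<Rightarrow> nat" where
  "max_phi_length \<A> \<phi> = Max (insert 0 ((\<lambda>a. length (\<phi> a)) ` \<A>))"

definition max_phi_pow_length :: "'a set \<Rightarrow> ('a \<Rightarrow> 'a word) \<Rightarrow> nat \<Rightarrow> nat" where
  "max_phi_pow_length \<A> \<phi> k = Max (insert 0 ((\<lambda>l. length (phi_pow \<phi> k [l])) ` (Some ` \<A> \<times> UNIV)))"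

definition strip_length_bound :: "'a set \<Rightarrow> ('a \<Rightarrow> 'a word) \<Rightarrow> nat \<Rightarrow> nat" where
  "strip_length_bound \<A> \<phi> k =
     k + 6 + max_phi_length \<A> \<phi> + max_phi_pow_length \<A> \<phi> k + max_phi_pow_length \<A> \<phi> (Suc k)"

definition strip_offsets :: "'a set \<Rightarrow> ('a \<Rightarrow> 'a word) \<Rightarrow> nat \<Rightarrow> 'a word set" where
  "strip_offsets \<A> \<phi> k = {u. length u \<le> strip_length_bound \<A> \<phi> k \<and> set u \<subseteq> gens \<A> \<times> UNIV \<and>
     int k \<le> t_degree u + 2}"

lemma finite_strip_offsets: "finite \<A> \<Longrightarrow> finite (strip_offsets \<A> \<phi> k)"
  using finite_lists_length_le[of "gens \<A> \<times> UNIV" "strip_length_bound \<A> \<phi> k"]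
  by (rule finite_subset[rotated]) (auto simp: strip_offsets_def gens_def)

lemma length_phi_le_max: "finite \<A> \<Longrightarrow> a \<in> \<A> \<Longrightarrow> length (\<phi> a) \<le> max_phi_length \<A> \<phi>"
  unfolding max_phi_length_def by (rule Max_ge) auto

lemma length_phi_pow_le_max:
  "finite \<A> \<Longrightarrow> fst l \<in> Some ` \<A> \<Longrightarrow> length (phi_pow \<phi> k [l]) \<le> max_phi_pow_length \<A> \<phi> k"
  unfolding max_phi_pow_length_def by (rule Max_ge) (auto simp: mem_Times_iff)

lemma append_vertex_offset_in_strip_offsets:
  assumes y: "vertex_offset W y" and set: "set (X @ W) \<subseteq> gens \<A> \<times> UNIV"
    and length: "length X + length W < strip_length_bound \<A> \<phi> k"
    and degree: "\<forall>j. int k \<le> t_degree (X @ take j W)"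
  shows "X @ y \<in> strip_offsets \<A> \<phi> k"
proof (cases "y = []")
  case False
  then obtain j where j: "j < length W"
    and "y \<in> {take j W, take j W @ [W ! j], take j W @ [W ! j, (fst (W ! j), False)]}"
    using y by (auto simp: vertex_offset_def)
  then obtain z where yz: "y = take j W @ z" and "z \<in> {[], [W ! j], [W ! j, (fst (W ! j), False)]}"
    by blast
  moreover have "W ! j \<in> gens \<A> \<times> UNIV" using set j by (auto dest: nth_mem)
  ultimately have "length z \<le> 2" "set z \<subseteq> gens \<A> \<times> UNIV" "-2 \<le> t_degree z"
    by (cases "W ! j", auto)+
  moreover have "set (take j W) \<subseteq> set W" by (rule set_take_subset)
  ultimately show ?thesis using set length degree[rule_format, of j] j
    unfolding strip_offsets_def yz by auto
qed (use set length degree[rule_format, of 0] in \<open>auto simp: strip_offsets_def\<close>)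

lemma t_degree_take_conj_rel:
  assumes "A_word \<A> (\<phi> a)"
  shows "-1 \<le> t_degree (take i (conj_rel \<phi> a))"
proof -
  have zero: "t_degree (take j (inv_word (\<phi> a))) = 0" for j
    by (intro t_degree_eq_0[where B = \<A>]
        order_trans[OF set_take_subset set_inv_word_subset[OF A_word_set[OF assms]]])
  have prefix: "-1 \<le> t_degree (take i [(None, True), (Some a, False), (None, False)])"
  proof (cases "i < 3")
    case True
    then have "i = 0 \<or> i = 1 \<or> i = 2" by auto
    then show ?thesis by (auto simp: numeral_2_eq_2)
  qed simp
  show ?thesis unfolding conj_rel_def take_append t_degree_append zero using prefix by simp
qed

lemma Some_gens_subset: "Some ` \<A> \<times> UNIV \<subseteq> gens \<A> \<times> (UNIV :: bool set)"
  by (auto simp: gens_def)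

lemma set_tpow_gens: "set (tpow i) \<subseteq> gens \<A> \<times> UNIV"
  using set_tpow by (fastforce simp: gens_def)

lemma strip_offset_witness:
  assumes "base_vertex p \<in> (\<lambda>y. vcls Rl (w0 @ X @ y)) ` {y. vertex_offset V y}"
    and "set (X @ V) \<subseteq> gens \<A> \<times> UNIV" "length X + length V < strip_length_bound \<A> \<phi> k"
    and "\<forall>j. int k \<le> t_degree (X @ take j V)"
  shows "\<exists>u \<in> strip_offsets \<A> \<phi> k. base_vertex p = vcls Rl (w0 @ u)"
  using assms append_vertex_offset_in_strip_offsets[OF _ assms(2-4)] by fastforce

lemma strip_cases:
  assumes "p \<in> strip Rl \<phi> (v, l) k"
  obtains (cell) j where "j < length (phi_pow \<phi> k [l])"
      "p \<in> closed_cell Rl (gmul Rl (if snd (phi_pow \<phi> k [l] ! j)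
          then gmul Rl (gmulw Rl (gmulw Rl v (tpow k)) (take j (phi_pow \<phi> k [l]))) (phi_pow \<phi> k [l] ! j)
          else gmulw Rl (gmulw Rl v (tpow k)) (take j (phi_pow \<phi> k [l]))) (None, False))
        (conj_rel \<phi> (the (fst (phi_pow \<phi> k [l] ! j))))"
  | (t_edge) \<sigma> where "p = oe_pt Rl (gmulw Rl v (tpow k), (None, False)) \<sigma>"
  | (t_edge') \<sigma> where "p = oe_pt Rl (gmulw Rl (gmul Rl v l) (tpow k), (None, False)) \<sigma>"
  | (bottom) x where "p = word_path Rl (gmulw Rl v (tpow k)) (phi_pow \<phi> k [l]) x"
  | (top) x where "p = word_path Rl (gmulw Rl v (tpow (Suc k))) (phi_pow \<phi> (Suc k) [l]) x"
  using assms unfolding strip_def Let_def fst_conv snd_conv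
  by (elim UnE UN_E imageE) (auto intro: that)

lemma base_vertex_strip_cell:
  assumes fin: "finite \<A>" and phi: "\<forall>a\<in>\<A>. A_word \<A> (\<phi> a)"
    and W: "set W \<subseteq> Some ` \<A> \<times> UNIV" "length W \<le> max_phi_pow_length \<A> \<phi> k" and j: "j < length W"
    and p: "p \<in> closed_cell Rl (gmul Rl (if snd (W ! j) then gmul Rl (gmulw Rl (gmulw Rl (vcls Rl w0) (tpow k)) (take j W)) (W ! j)
            else gmulw Rl (gmulw Rl (vcls Rl w0) (tpow k)) (take j W)) (None, False)) (conj_rel \<phi> (the (fst (W ! j))))"
  shows "\<exists>u \<in> strip_offsets \<A> \<phi> k. base_vertex p = vcls Rl (w0 @ u)"
proof -
  define m where "m = W ! j"
  obtain a where a: "fst m = Some a" "a \<in> \<A>"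
    using W(1) nth_mem[OF j] by (auto simp: m_def mem_Times_iff)
  define X where "X = tpow k @ take j W @ (if snd m then [m] else []) @ [(None, False)]"
  have "base_vertex p \<in> (\<lambda>y. vcls Rl (w0 @ X @ y)) ` {y. vertex_offset (conj_rel \<phi> a) y}"
    using base_vertex_closed_cell[of p Rl "w0 @ X" "conj_rel \<phi> a"] p a
    by (cases "snd m") (simp_all add: X_def m_def gmulw_vcls gmul_vcls)
  moreover have "m \<in> gens \<A> \<times> UNIV"
    using a by (auto simp: gens_def mem_Times_iff)
  then have "set (X @ conj_rel \<phi> a) \<subseteq> gens \<A> \<times> UNIV"
    using set_tpow_gens[of k] W(1) set_take_subset[of j W] Some_gens_subset
      set_inv_word_subset[OF order_trans[OF A_word_set[OF bspec[OF phi a(2)]] Some_gens_subset]] a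
    by (auto simp: X_def conj_rel_def gens_def)
  moreover have "length X + length (conj_rel \<phi> a) < strip_length_bound \<A> \<phi> k"
    using W(2) length_phi_le_max[OF fin a(2), of \<phi>]
    by (auto simp: X_def conj_rel_def inv_word_def strip_length_bound_def min_def)
  moreover have "\<forall>i. int k \<le> t_degree (X @ take i (conj_rel \<phi> a))"
  proof
    fix i
    have "t_degree (take j W) = 0"
      by (intro t_degree_eq_0[where B = \<A>] order_trans[OF set_take_subset W(1)])
    then show "int k \<le> t_degree (X @ take i (conj_rel \<phi> a))"
      using t_degree_take_conj_rel[of \<A> \<phi> a i, OF bspec[OF phi a(2)]] a
      by (simp add: X_def)
  qed
  ultimately show ?thesis by (rule strip_offset_witness)
qed

lemma base_vertex_strip:
  assumes fin: "finite \<A>" and phi: "\<forall>a\<in>\<A>. A_word \<A> (\<phi> a)" and l: "fst l \<in> Some ` \<A>"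
    and p: "p \<in> strip Rl \<phi> (vcls Rl w0, l) k"
  shows "\<exists>u \<in> strip_offsets \<A> \<phi> k. base_vertex p = vcls Rl (w0 @ u)"
proof -
  have l_gen: "l \<in> Some ` \<A> \<times> UNIV" using l by (auto simp: mem_Times_iff)
  then have phi_pow_set: "set (phi_pow \<phi> i [l]) \<subseteq> Some ` \<A> \<times> UNIV" for i
    using set_phi_pow[OF phi] by simp
  then have phi_pow_gen: "set (phi_pow \<phi> i [l]) \<subseteq> gens \<A> \<times> UNIV" for i
    using Some_gens_subset by blast
  have phi_pow_degree: "t_degree (take j (phi_pow \<phi> i [l])) = 0" for i j
    by (intro t_degree_eq_0[where B = \<A>] order_trans[OF set_take_subset phi_pow_set])
  have phi_pow_length: "length (phi_pow \<phi> i [l]) \<le> max_phi_pow_length \<A> \<phi> i" for i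
    using length_phi_pow_le_max[OF fin l] .
  have t_gen: "(None, False) \<in> gens \<A> \<times> UNIV" by (simp add: gens_def)
  let ?W = "phi_pow \<phi> k [l]"
  from p show ?thesis
  proof (cases rule: strip_cases)
    case cell
    then show ?thesis
      using phi_pow_set[of k] phi_pow_length[of k]
      by (intro base_vertex_strip_cell[OF fin phi])
  next
    case (t_edge \<sigma>)
    then show ?thesis
      using base_vertex_oe_pt[of Rl "w0 @ tpow k" "(None, False)" \<sigma>] set_tpow_gens[of k] t_gen
      by (intro strip_offset_witness[of p Rl w0 "tpow k" "[(None, False)]"])
        (simp_all add: gmulw_vcls strip_length_bound_def take_Cons')
  next
    case (t_edge' \<sigma>)
    then show ?thesis
      using base_vertex_oe_pt[of Rl "w0 @ [l] @ tpow k" "(None, False)" \<sigma>] set_tpow_gens[of k]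
        t_gen l_gen
      by (intro strip_offset_witness[of p Rl w0 "[l] @ tpow k" "[(None, False)]"])
        (auto simp: gmulw_vcls gmul_vcls strip_length_bound_def take_Cons' gens_def)
  next
    case (bottom x)
    then show ?thesis
      using base_vertex_word_path[of Rl "w0 @ tpow k" ?W x] set_tpow_gens[of k] phi_pow_gen[of k]
        phi_pow_length[of k] phi_pow_degree[of _ k]
      by (intro strip_offset_witness[of p Rl w0 "tpow k" ?W]) (simp_all add: gmulw_vcls strip_length_bound_def)
  next
    case (top x)
    then show ?thesis
      using base_vertex_word_path[of Rl "w0 @ tpow (Suc k)" "phi_pow \<phi> (Suc k) [l]" x]
        set_tpow_gens[of "Suc k"] phi_pow_gen[of "Suc k"] phi_pow_length[of "Suc k"]
        phi_pow_degree[of _ "Suc k"]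
      by (intro strip_offset_witness[of p Rl w0 "tpow (Suc k)" "phi_pow \<phi> (Suc k) [l]"])
        (simp_all add: gmulw_vcls strip_length_bound_def)
  qed
qed

section \<open>The homotopy \<open>H\<^sub>s\<close>\<close>

lemma subgrp_A_obtain:
  assumes "g \<in> subgrp_A \<A> Rl"
  obtains w where "g = vcls Rl w" "set w \<subseteq> Some ` \<A> \<times> UNIV"
proof -
  obtain w where w: "g = vcls Rl w" "\<forall>l\<in>set w. fst l \<in> Some ` \<A>"
    using assms by (auto simp: subgrp_A_def)
  moreover from w(2) have "set w \<subseteq> Some ` \<A> \<times> UNIV" by (auto simp: mem_Times_iff)
  ultimately show thesis using that by blast
qed

lemma ray_map_t_ray:
  "0 \<le> y \<Longrightarrow> ray_map Rl (t_ray Rl v) y =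
     oe_pt Rl (gmulw Rl v (tpow (nat \<lfloor>y\<rfloor>)), (None, False)) (y - real (nat \<lfloor>y\<rfloor>))"
  by (simp add: ray_map_def t_ray_def)

locale strip_homotopy =
  fixes \<A> :: "'a set" and Rl :: "'a word set" and \<phi> :: "'a \<Rightarrow> 'a word"
    and s :: "nat \<Rightarrow> 'a grp \<times> 'a letter"
    and H :: "'a grp \<times> 'a letter \<Rightarrow> real \<times> real \<Rightarrow> 'a xpt"
  assumes ray: "edge_path_ray_in_Lambda \<A> Rl s"
    and strip_map: "\<And>n. is_strip_map \<A> Rl \<phi> (s n) (H (s n))"
begin

lemma vertex_in_subgrp_A: "fst (s n) \<in> subgrp_A \<A> Rl"
  using ray by (simp add: edge_path_ray_in_Lambda_def)

lemma vertex_obtain: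
  obtains w where "fst (s n) = vcls Rl w" "set w \<subseteq> Some ` \<A> \<times> UNIV"
  using subgrp_A_obtain[OF vertex_in_subgrp_A] by metis

lemma Hs_eq: "0 \<le> x \<Longrightarrow> Hs s H (x, y) = H (s (nat \<lfloor>x\<rfloor>)) (x - real (nat \<lfloor>x\<rfloor>), y)"
  by (simp add: Hs_def)

lemma strip_map_bottom: "x \<in> {0..1} \<Longrightarrow> H (s n) (x, 0) = oe_pt Rl (s n) x"
proof -
  assume x: "x \<in> {0..1}"
  obtain w where w: "fst (s n) = vcls Rl w" by (rule vertex_obtain)
  have "\<forall>x\<in>{0..1}. H (s n) (x, real 0) =
      word_path Rl (gmulw Rl (fst (s n)) (tpow 0)) (phi_pow \<phi> 0 [snd (s n)]) x"
    using strip_map[of n] unfolding is_strip_map_def Let_def by blast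
  then have "H (s n) (x, 0) = word_path Rl (gmulw Rl (fst (s n)) (tpow 0)) (phi_pow \<phi> 0 [snd (s n)]) x"
    using x by simp
  also have "\<dots> = oe_pt Rl (fst (s n), snd (s n)) x"
    using w by (simp add: word_path_def tpow_def phi_pow_def gmulw_vcls)
  finally show ?thesis by simp
qed

lemma strip_map_sides:
  assumes "0 \<le> y"
  shows "H (s n) (0, y) = ray_map Rl (t_ray Rl (fst (s n))) y"
    and "H (s n) (1, y) = ray_map Rl (t_ray Rl (fst (s (Suc n)))) y"
proof -
  define k where "k = nat \<lfloor>y\<rfloor>"
  have "y \<in> {real k..real k + 1}" using assms by (simp add: k_def)
  then have "H (s n) (0, y) = oe_pt Rl (gmulw Rl (fst (s n)) (tpow k), (None, False)) (y - real k) \<and>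
      H (s n) (1, y) = oe_pt Rl (gmulw Rl (gmul Rl (fst (s n)) (snd (s n))) (tpow k), (None, False)) (y - real k)"
    using strip_map[of n] unfolding is_strip_map_def Let_def by blast
  moreover have "fst (s (Suc n)) = gmul Rl (fst (s n)) (snd (s n))"
    using ray by (simp add: edge_path_ray_in_Lambda_def)
  ultimately show "H (s n) (0, y) = ray_map Rl (t_ray Rl (fst (s n))) y"
    and "H (s n) (1, y) = ray_map Rl (t_ray Rl (fst (s (Suc n)))) y"
    by (simp_all add: ray_map_t_ray[OF assms] k_def)
qed

lemma Hs_bottom: "0 \<le> x \<Longrightarrow> Hs s H (x, 0) = ray_map Rl s x"
proof -
  assume "0 \<le> x"
  then have "x - real (nat \<lfloor>x\<rfloor>) \<in> {0..1}" by simp linarith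
  then show ?thesis using \<open>0 \<le> x\<close> by (simp add: Hs_eq strip_map_bottom ray_map_def)
qed

lemma Hs_left: "0 \<le> y \<Longrightarrow> Hs s H (0, y) = ray_map Rl (t_ray Rl (fst (s 0))) y"
  by (simp add: Hs_eq strip_map_sides)

lemma finite_strips_near: "finite {n::nat. ({real n..real n + 1} \<times> S) \<inter> ball p 1 \<noteq> {}}"
proof (rule finite_subset)
  show "{n::nat. ({real n..real n + 1} \<times> S) \<inter> ball p 1 \<noteq> {}} \<subseteq> {..nat \<lceil>fst p + 1\<rceil>}"
  proof
    fix n assume "n \<in> {n::nat. ({real n..real n + 1} \<times> S) \<inter> ball p 1 \<noteq> {}}"
    then obtain q where "real n \<le> fst q" "dist p q < 1" by auto
    moreover have "dist (fst p) (fst q) \<le> dist p q" by (rule dist_fst_le)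
    ultimately have "real n \<le> fst p + 1" by (simp add: dist_real_def)
    then show "n \<in> {..nat \<lceil>fst p + 1\<rceil>}" by simp linarith
  qed
qed simp

lemma continuous_map_Hs:
  "continuous_map (top_of_set ({0..} \<times> {0..})) (cayley_top \<A> Rl) (Hs s H)"
proof -
  define Q where "Q = {0::real..} \<times> {0::real..}"
  define T where "T = (\<lambda>n::nat. {real n..real n + 1} \<times> {0::real..})"
  define f where "f = (\<lambda>n::nat. \<lambda>p::real \<times> real. H (s n) (fst p - real n, snd p))"
  have TQ: "T n \<subseteq> Q" for n by (auto simp: T_def Q_def)
  have "continuous_map (top_of_set Q) (cayley_top \<A> Rl) (Hs s H)"
  proof (rule pasting_lemma_locally_finite[where I=UNIV and T=T and f=f])
    fix p assume "p \<in> topspace (top_of_set Q)"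
    then show "\<exists>V. openin (top_of_set Q) V \<and> p \<in> V \<and> finite {i \<in> UNIV. T i \<inter> V \<noteq> {}}"
    proof (intro exI conjI)
      show "openin (top_of_set Q) (Q \<inter> ball p 1)" by (rule openin_open_Int) simp
      show "finite {i \<in> UNIV. T i \<inter> (Q \<inter> ball p 1) \<noteq> {}}"
        by (rule finite_subset[OF _ finite_strips_near[of "{0..}" p]]) (auto simp: T_def)
    qed simp
  next
    fix i
    have "closed (T i)" by (simp add: T_def closed_Times)
    then show "closedin (top_of_set Q) (T i)"
      using closedin_closed_Int[of "T i" Q] TQ[of i] by (simp add: Int_absorb1)
  next
    fix i
    have "continuous_map (top_of_set (T i)) (top_of_set ({0..1} \<times> {0..})) (\<lambda>p. (fst p - real i, snd p))"
      by (auto simp: continuous_map_in_subtopology T_def intro!: continuous_intros)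
    moreover have "continuous_map (top_of_set ({0..1} \<times> {0..})) (cayley_top \<A> Rl) (H (s i))"
      using strip_map[of i] by (simp add: is_strip_map_def Let_def)
    ultimately have "continuous_map (top_of_set (T i)) (cayley_top \<A> Rl) (H (s i) \<circ> (\<lambda>p. (fst p - real i, snd p)))"
      by (rule continuous_map_compose)
    then show "continuous_map (subtopology (top_of_set Q) (T i)) (cayley_top \<A> Rl) (f i)"
      using TQ by (simp add: subtopology_subtopology inf.absorb2 f_def o_def)
  next
    fix i j p assume "p \<in> topspace (top_of_set Q) \<inter> T i \<inter> T j"
    then have p: "p \<in> T i" "p \<in> T j" "0 \<le> snd p" by (auto simp: T_def)
    have glue: "f m p = f (Suc m) p" if "fst p = real (Suc m)" for m
      using that p(3) by (simp add: f_def strip_map_sides)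
    consider "i = j" | "j = Suc i" "fst p = real j" | "i = Suc j" "fst p = real i"
      using p(1,2) unfolding T_def by (cases "i < j") (auto simp: mem_Times_iff; linarith)+
    then show "f i p = f j p" by cases (use glue in auto)
  next
    fix p assume "p \<in> topspace (top_of_set Q)"
    then have "0 \<le> fst p" "0 \<le> snd p" by (auto simp: Q_def mem_Times_iff)
    then show "\<exists>j. j \<in> UNIV \<and> p \<in> T j \<and> Hs s H p = f j p"
      by (intro exI[of _ "nat \<lfloor>fst p\<rfloor>"]) (auto simp: T_def mem_Times_iff f_def Hs_def)
  qed
  then show ?thesis by (simp add: Q_def)
qed

end

lemma (in strip_homotopy) Hs_origin: "Hs s H (0, 0) = Vtx (fst (s 0))"
proof -
  obtain w where w: "fst (s 0) = vcls Rl w" by (rule vertex_obtain)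
  then show ?thesis using Hs_left[of 0] by (simp add: ray_map_t_ray tpow_def gmulw_vcls oe_pt_0)
qed

section \<open>Properness\<close>

locale proper_strip_homotopy = strip_homotopy +
  assumes finite_gens: "finite \<A>"
    and phi_words: "\<forall>a\<in>\<A>. A_word \<A> (\<phi> a)"
    and t_degree_relators: "\<forall>r\<in>Rl. t_degree r = 0"
    and proper: "proper_ray \<A> Rl s"
begin

lemma finite_visits: "finite {n. fst (s n) = g}"
proof (cases "\<exists>n. fst (s n) = g")
  case True
  then have "g \<in> subgrp_A \<A> Rl" using vertex_in_subgrp_A by blast
  then have "Vtx g \<in> topspace (cayley_top \<A> Rl)"
    by (force simp: topspace_cayley_top canon.simps cells_carrier_def subgrp_A_def grp_carrier_def gens_def)
  then have "compactin (cayley_top \<A> Rl) {Vtx g}" by simp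
  then have "compactin (top_of_set {0..}) {y \<in> {0::real..}. ray_map Rl s y \<in> {Vtx g}}"
    using proper unfolding proper_ray_def by blast
  then have "bounded {y \<in> {0::real..}. ray_map Rl s y \<in> {Vtx g}}"
    by (simp add: compactin_subtopology compact_imp_bounded)
  then obtain B where "\<forall>y \<in> {y \<in> {0::real..}. ray_map Rl s y \<in> {Vtx g}}. \<bar>y\<bar> \<le> B"
    unfolding bounded_real by blast
  then have B: "\<And>y. y \<in> {y \<in> {0::real..}. ray_map Rl s y \<in> {Vtx g}} \<Longrightarrow> y \<le> B"
    by fastforce
  have bound: "real n \<le> B" if "fst (s n) = g" for n
  proof (rule B)
    obtain w where "fst (s n) = vcls Rl w" by (rule vertex_obtain)
    then have "oe_pt Rl (s n) 0 = Vtx (fst (s n))" by (metis oe_pt_0 prod.collapse)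
    then show "real n \<in> {y \<in> {0::real..}. ray_map Rl s y \<in> {Vtx g}}"
      using that by (simp add: ray_map_def)
  qed
  have "n \<le> nat \<lceil>B\<rceil>" if "fst (s n) = g" for n
  proof -
    have "real n \<le> real (nat \<lceil>B\<rceil>)" using bound[OF that] by linarith
    then show ?thesis by simp
  qed
  then have "{n. fst (s n) = g} \<subseteq> {..nat \<lceil>B\<rceil>}" by auto
  then show ?thesis using finite_subset by blast
qed simp

lemma Hs_in_strip: "0 \<le> a \<Longrightarrow> 0 \<le> b \<Longrightarrow> Hs s H (a, b) \<in> strip Rl \<phi> (s (nat \<lfloor>a\<rfloor>)) (nat \<lfloor>b\<rfloor>)"
proof -
  assume "0 \<le> a" "0 \<le> b"
  then have "(a - real (nat \<lfloor>a\<rfloor>), b) \<in> {0..1} \<times> {real (nat \<lfloor>b\<rfloor>)..real (nat \<lfloor>b\<rfloor>) + 1}"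
    by simp linarith
  moreover have "H (s n) ` ({0..1} \<times> {real k..real k + 1}) = strip Rl \<phi> (s n) k" for n k
    using strip_map[of n] unfolding is_strip_map_def Let_def by blast
  ultimately show ?thesis using \<open>0 \<le> a\<close> by (auto simp: Hs_eq simp del: atLeastAtMost_iff)
qed

lemma base_vertex_Hs:
  assumes "0 \<le> a" "0 \<le> b"
  obtains u where "u \<in> strip_offsets \<A> \<phi> (nat \<lfloor>b\<rfloor>)"
    and "fst (s (nat \<lfloor>a\<rfloor>)) = gmulw Rl (base_vertex (Hs s H (a, b))) (inv_word u)"
    and "t_degree_grp Rl (base_vertex (Hs s H (a, b))) = t_degree u"
proof -
  let ?n = "nat \<lfloor>a\<rfloor>"
  obtain w where w: "fst (s ?n) = vcls Rl w" "set w \<subseteq> Some ` \<A> \<times> UNIV" by (rule vertex_obtain)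
  have "fst (snd (s ?n)) \<in> Some ` \<A>" using ray by (simp add: edge_path_ray_in_Lambda_def)
  moreover have "Hs s H (a, b) \<in> strip Rl \<phi> (vcls Rl w, snd (s ?n)) (nat \<lfloor>b\<rfloor>)"
    using Hs_in_strip[OF assms] w(1) by (metis prod.collapse)
  ultimately obtain u where u: "u \<in> strip_offsets \<A> \<phi> (nat \<lfloor>b\<rfloor>)"
    "base_vertex (Hs s H (a, b)) = vcls Rl (w @ u)"
    using base_vertex_strip[OF finite_gens phi_words] by blast
  show thesis
  proof (rule that[OF u(1)])
    show "fst (s ?n) = gmulw Rl (base_vertex (Hs s H (a, b))) (inv_word u)"
      using u(2) w(1) peq.sym[OF peq_append_inv_word] by (simp add: gmulw_vcls vcls_eq_iff)
    show "t_degree_grp Rl (base_vertex (Hs s H (a, b))) = t_degree u"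
      using u(2) t_degree_eq_0[OF w(2)] by (simp add: t_degree_grp_vcls[OF t_degree_relators])
  qed
qed

lemma Hs_preimage_bounded:
  assumes "compactin (cayley_top \<A> Rl) K"
  obtains N M where "\<And>a b. 0 \<le> a \<Longrightarrow> 0 \<le> b \<Longrightarrow> Hs s H (a, b) \<in> K \<Longrightarrow> a \<le> N \<and> b \<le> M"
proof -
  define V where "V = base_vertex ` K"
  have "finite V" unfolding V_def by (rule finite_base_vertex_compactin[OF assms])
  define kmax where "kmax = nat (Max (insert 0 (t_degree_grp Rl ` V)) + 2)"
  define F where "F = (\<lambda>(g, u). gmulw Rl g (inv_word u)) ` (V \<times> (\<Union>k\<le>kmax. strip_offsets \<A> \<phi> k))"
  have "finite F" unfolding F_def using \<open>finite V\<close> finite_strip_offsets[OF finite_gens] by auto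
  define nmax where "nmax = Max (insert 0 (\<Union>g\<in>F. {n. fst (s n) = g}))"
  have "finite (\<Union>g\<in>F. {n. fst (s n) = g})" using \<open>finite F\<close> finite_visits by blast
  have "a \<le> real nmax + 1 \<and> b \<le> real kmax + 1" if ab: "0 \<le> a" "0 \<le> b" "Hs s H (a, b) \<in> K" for a b
  proof -
    let ?g = "base_vertex (Hs s H (a, b))"
    obtain u where u: "u \<in> strip_offsets \<A> \<phi> (nat \<lfloor>b\<rfloor>)"
      "fst (s (nat \<lfloor>a\<rfloor>)) = gmulw Rl ?g (inv_word u)" "t_degree_grp Rl ?g = t_degree u"
      using base_vertex_Hs[OF ab(1,2)] by blast
    have g: "?g \<in> V" using ab(3) by (simp add: V_def)
    then have "t_degree_grp Rl ?g \<le> Max (insert 0 (t_degree_grp Rl ` V))"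
      using \<open>finite V\<close> by (intro Max_ge) auto
    then have "int (nat \<lfloor>b\<rfloor>) \<le> Max (insert 0 (t_degree_grp Rl ` V)) + 2"
      using u(1,3) by (simp add: strip_offsets_def)
    then have "nat \<lfloor>b\<rfloor> \<le> kmax" unfolding kmax_def by linarith
    then have "fst (s (nat \<lfloor>a\<rfloor>)) \<in> F" using u(1,2) g unfolding F_def by force
    then have "nat \<lfloor>a\<rfloor> \<le> nmax"
      unfolding nmax_def using \<open>finite (\<Union>g\<in>F. {n. fst (s n) = g})\<close> by (intro Max_ge) auto
    with \<open>nat \<lfloor>b\<rfloor> \<le> kmax\<close> show ?thesis using ab(1,2) by linarith
  qed
  then show thesis by (rule that)
qed

lemma proper_Hs:
  assumes K: "compactin (cayley_top \<A> Rl) K"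
  shows "compactin (top_of_set ({0..} \<times> {0..})) {p \<in> {0..} \<times> {0..}. Hs s H p \<in> K}"
proof -
  let ?Q = "{0::real..} \<times> {0::real..}"
  have "closedin (cayley_top \<A> Rl) K"
    using compactin_imp_closedin[OF Hausdorff_space_cayley_top K] .
  then have "closedin (top_of_set ?Q) {p \<in> topspace (top_of_set ?Q). Hs s H p \<in> K}"
    by (rule closedin_continuous_map_preimage[OF continuous_map_Hs])
  then have "closed {p \<in> ?Q. Hs s H p \<in> K}"
    by (simp add: closedin_closed_trans closed_Times)
  moreover obtain N M where "\<And>a b. 0 \<le> a \<Longrightarrow> 0 \<le> b \<Longrightarrow> Hs s H (a, b) \<in> K \<Longrightarrow> a \<le> N \<and> b \<le> M"
    using Hs_preimage_bounded[OF K] by blast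
  then have "{p \<in> ?Q. Hs s H p \<in> K} \<subseteq> cbox (0, 0) (N, M)"
    by (auto simp: mem_Times_iff cbox_Pair_eq)
  ultimately show ?thesis
    by (simp add: compactin_subtopology compact_eq_bounded_closed bounded_subset[OF bounded_cbox])
qed

end

theorem lemma3p3:
  fixes \<A> :: "'a set" and R :: "'a word set" and \<phi> :: "'a \<Rightarrow> 'a word"
    and s :: "nat \<Rightarrow> 'a grp \<times> 'a letter"
    and H :: "'a grp \<times> 'a letter \<Rightarrow> real \<times> real \<Rightarrow> 'a xpt"
  assumes "finite \<A>"
    and "finite R" and "\<forall>r\<in>R. A_word \<A> r"
    and "\<forall>a\<in>\<A>. A_word \<A> (\<phi> a)"
    and "edge_path_ray_in_Lambda \<A> (rels \<A> R \<phi>) s"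
    and "proper_ray \<A> (rels \<A> R \<phi>) s"
    and "\<forall>n. is_strip_map \<A> (rels \<A> R \<phi>) \<phi> (s n) (H (s n))"
  shows "let Rl = rels \<A> R \<phi>; X = cayley_top \<A> Rl; v = fst (s 0); Q = {0::real..} \<times> {0::real..} in
     continuous_map (top_of_set Q) X (Hs s H) \<and>
     (\<forall>K. compactin X K \<longrightarrow> compactin (top_of_set Q) {p \<in> Q. Hs s H p \<in> K}) \<and>
     (\<forall>x\<ge>0. Hs s H (x, 0) = ray_map Rl s x) \<and>
     (\<forall>y\<ge>0. Hs s H (0, y) = ray_map Rl (t_ray Rl v) y) \<and>
     Hs s H (0, 0) = Vtx v"
proof -
  interpret proper_strip_homotopy \<A> "rels \<A> R \<phi>" \<phi> s H
    using assms t_degree_rels[OF assms(3,4)] by unfold_locales auto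
  show ?thesis
    unfolding Let_def using continuous_map_Hs proper_Hs Hs_bottom Hs_left Hs_origin by blast
qed

end
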